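(* Let $t=(I_2|e_2)\in\mathrm E(2)$, $\mathcal G=\langle t\rangle$, $x_0=0\in\mathbb R^2$, and let $\mathcal R\subset\mathcal G$ have Property 2 (e.g. $\mathcal R=\{\mathrm{id},t,t^2\}$). Then the seminorms $\|\cdot\|_{\mathcal R,0,0}$ and $u\mapsto\|\nabla_{\mathcal R}u\|_2$ are equivalent on $U_{\mathrm{per}}$, and there exist constants $C,c>0$ such that for all $u\in U_{\mathrm{per}}$ \[c\|\nabla_{\mathcal R}u\|_2^2\le\sum_{k\in[0,1)\cap\mathbb Q}|k|_1^2\,|\hat u(\chi_k)|^2\le C\|\nabla_{\mathcal R}u\|_2^2\] and \[c\|u\|_{\mathcal R}^2\le\sum_{k\in[0,1)\cap\mathbb Q}\Big(|k|_1^4|\hat u_1(\chi_k)|^2+|k|_1^2|\hat u_2(\chi_k)|^2\Big)\le C\|u\|_{\mathcal R}^2.\]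
   Context: Elements of $\mathrm E(2)$ are pairs $(A|b)$ acting by $x\mapsto Ax+b$; $\mathrm{rot}(A|b)=A$. Here $\mathcal G=\{t^n:n\in\mathbb Z\}$, $t^n\cdot x=x+ne_2$, and $\mathrm{rot}(t^n)=I_2$. $U_{\mathrm{per}}$ is the set of maps $u=(u_1,u_2):\mathcal G\to\mathbb R^2$ for which there is $N\in\mathbb N$ with $u(t^{n+N})=u(t^n)$ for all $n$; for such $N$ let $\mathcal C_N=\{t^0,\dots,t^{N-1}\}$. For $\mathcal R\subset\mathcal G$ finite, $(\mathbb R^2)^{\mathcal R}$ carries the Euclidean norm; $U_{\mathrm{iso}}(\mathcal R)$ is the set of $v:\mathcal R\to\mathbb R^2$ with $a\in\mathbb R^2$, $S\in\mathrm{Skew}(2)$ such that $\mathrm{rot}(g)v(g)=a+S(g\cdot x_0-x_0)$ for $g\in\mathcal R$, and $U_{\mathrm{iso},0,0}(\mathcal R)$ the set of $v$ with $\mathrm{rot}(g)v(g)=a$ for some $a\in\mathbb R^2$ and all $g\in\mathcal R$. $\|u\|_{\mathcal R}$ (resp. $\|u\|_{\mathcal R,0,0}$) $=\big(\frac1N\sum_{g\in\mathcal C_N}\mathrm{dist}(u(g\,\cdot)|_{\mathcal R},U)^2\big)^{1/2}$ with $U=U_{\mathrm{iso}}(\mathcal R)$ (resp. $U_{\mathrm{iso},0,0}(\mathcal R)$); $\|\nabla_{\mathcal R}u\|_2=\big(\frac1N\sum_{g\in\mathcal C_N}\sum_{h\in\mathcal R}|u(gh)-\mathrm{rot}(h)^Tu(g)|^2\big)^{1/2}$.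 Property 2: $\mathcal R$ is finite and there are $\mathcal R',\mathcal R''\subset\mathcal G$ with $\mathrm{id}\in\mathcal R'$, $\mathcal R'$ generating $\mathcal G$, $\mathcal R''$ finite with $\mathrm{id}\in\mathcal R''$ and affine hull of $\mathcal R''\cdot x_0$ equal to that of $\mathcal G\cdot x_0$, and $\{gh:g\in\mathcal R',h\in\mathcal R''\}\subset\mathcal R$. For $k\in[0,1)$, $\chi_k(t^n)=e^{2\pi\mathrm i nk}$. For $k\in[0,1)\cap\mathbb Q$ and $u\in U_{\mathrm{per}}$, $\hat u(\chi_k)=\frac1M\sum_{n=0}^{M-1}e^{2\pi\mathrm i nk}u(t^n)\in\mathbb C^2$, where $M\in\mathbb N$ is any integer with $Mk\in\mathbb Z$ and $u(t^{n+M})=u(t^n)$ for all $n$ (independent of the choice); $\hat u_1,\hat u_2$ are its components. $|k|_1=\mathrm{dist}(k,\mathbb Z)$. *)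

theory Defs
  imports "HOL-Analysis.Analysis"
begin

type_synonym E2 = "(real^2^2) \<times> (real^2)"

definition act :: "E2 \<Rightarrow> real^2 \<Rightarrow> real^2" where
  "act g x = fst g *v x + snd g"

definition rot :: "E2 \<Rightarrow> real^2^2" where
  "rot g = fst g"

definition e2 :: "real^2" where
  "e2 = vector [0, 1]"

text \<open>The group G = {t^n}, with t = (I_2 | e_2); t^n is indexed by the integer n,
  so the group product t^m t^n corresponds to m + n.\<close>
definition tpow :: "int \<Rightarrow> E2" where
  "tpow n = (mat 1, of_int n *\<^sub>R e2)"

definition x0 :: "real^2" where
  "x0 = 0"

text \<open>Periodic displacement fields u : G \<rightarrow> R^2 (u n stands for u(t^n)).\<close>
definition Uper :: "(int \<Rightarrow> real^2) set" where
  "Uper = {u. \<exists>N::nat. N > 0 \<and> (\<forall>n. u (n + int N) = u n)}"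

definition per :: "(int \<Rightarrow> real^2) \<Rightarrow> nat" where
  "per u = (LEAST N::nat. N > 0 \<and> (\<forall>n. u (n + int N) = u n))"

definition Skew2 :: "(real^2^2) set" where
  "Skew2 = {S. transpose S = - S}"

definition Uiso :: "int set \<Rightarrow> (int \<Rightarrow> real^2) set" where
  "Uiso R = {v. \<exists>a S. S \<in> Skew2 \<and>
      (\<forall>g\<in>R. rot (tpow g) *v v g = a + S *v (act (tpow g) x0 - x0))}"

definition Uiso00 :: "int set \<Rightarrow> (int \<Rightarrow> real^2) set" where
  "Uiso00 R = {v. \<exists>a. \<forall>g\<in>R. rot (tpow g) *v v g = a}"

text \<open>Euclidean distance in (R^2)^R from v to a set U (only values on R matter).\<close>
definition distR :: "int set \<Rightarrow> (int \<Rightarrow> real^2) \<Rightarrow> (int \<Rightarrow> real^2) set \<Rightarrow> real" where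
  "distR R v U = Inf ((\<lambda>w. sqrt (\<Sum>h\<in>R. (norm (v h - w h))\<^sup>2)) ` U)"

definition seminormU :: "int set \<Rightarrow> (int \<Rightarrow> real^2) set \<Rightarrow> (int \<Rightarrow> real^2) \<Rightarrow> real" where
  "seminormU R U u = (let N = per u in
     sqrt ((1 / real N) * (\<Sum>g<N. (distR R (\<lambda>h. u (int g + h)) U)\<^sup>2)))"

definition normR :: "int set \<Rightarrow> (int \<Rightarrow> real^2) \<Rightarrow> real" where
  "normR R u = seminormU R (Uiso R) u"

definition normR00 :: "int set \<Rightarrow> (int \<Rightarrow> real^2) \<Rightarrow> real" where
  "normR00 R u = seminormU R (Uiso00 R) u"

definition gradnorm :: "int set \<Rightarrow> (int \<Rightarrow> real^2) \<Rightarrow> real" where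
  "gradnorm R u = (let N = per u in
     sqrt ((1 / real N) * (\<Sum>g<N. \<Sum>h\<in>R.
        (norm (u (int g + h) - transpose (rot (tpow h)) *v u (int g)))\<^sup>2)))"

definition generates :: "int set \<Rightarrow> bool" where
  "generates A \<longleftrightarrow> (\<forall>S. 0 \<in> S \<and> A \<subseteq> S \<and> (\<forall>x\<in>S. \<forall>y\<in>S. x + y \<in> S \<and> - x \<in> S)
                      \<longrightarrow> S = UNIV)"

definition Property2 :: "int set \<Rightarrow> bool" where
  "Property2 R \<longleftrightarrow> finite R \<and>
     (\<exists>R' R''. 0 \<in> R' \<and> generates R' \<and> finite R'' \<and> 0 \<in> R'' \<and>
        affine hull ((\<lambda>n. act (tpow n) x0) ` R'') = affine hull (range (\<lambda>n. act (tpow n) x0)) \<and>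
        {g + h | g h. g \<in> R' \<and> h \<in> R''} \<subseteq> R)"

definition uhat :: "(int \<Rightarrow> real^2) \<Rightarrow> real \<Rightarrow> complex^2" where
  "uhat u k = (let M = (LEAST M::nat. M > 0 \<and> real M * k \<in> \<int> \<and> (\<forall>n. u (n + int M) = u n)) in
     (\<chi> i. (1 / of_nat M) * (\<Sum>n<M. exp (2 * pi * \<i> * of_nat n * of_real k) * of_real (u (int n) $ i))))"

definition Qk :: "real set" where
  "Qk = {k. k \<in> \<rat> \<and> 0 \<le> k \<and> k < 1}"

definition absk :: "real \<Rightarrow> real" where
  "absk k = infdist k \<int>"

end

(* The quantities in the theorem are invariant under translations of periodic fields, so they
   diagonalise in the discrete Fourier basis of a period N of u: by Parseval, the mean square of a
   difference operator applied to u is the sum over the frequencies k = j/N of |symbol(k)|^2 times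
   |uhat u k|^2, and the sums over Qk only see these N frequencies.  It remains to compare symbols
   with powers of |k|_1 = absk k.  A first difference along h has symbol of modulus at most
   2 pi |h| |k|_1, and a Bezout relation sum c_h h = 1 over a generating subset of R bounds |k|_1 by
   these symbols.  The distance to constants is comparable to the first differences; the distance
   to infinitesimal rigid motions, which on the orbit read (alpha + beta h, gamma), is comparable to
   first differences of the second component together with second differences of the first one,
   whose symbols are of order |k|_1^4.  Property 2 supplies the generating subset and a nonzero
   shift b for these second differences. *)

theory Submission
  imports Defs
begin

lemma power2_add_le: "(x + y)\<^sup>2 \<le> 2 * x\<^sup>2 + 2 * (y::real)\<^sup>2"
  using zero_le_power2[of "x - y"] by (simp add: power2_eq_square algebra_simps)

lemma power2_add3_le: "(x + y + z)\<^sup>2 \<le> 3 * (x\<^sup>2 + y\<^sup>2 + (z::real)\<^sup>2)"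
  using zero_le_power2[of "x - y"] zero_le_power2[of "y - z"] zero_le_power2[of "x - z"]
  by (simp add: power2_eq_square algebra_simps)

lemma norm_diff_sq_le: "(norm (x - y))\<^sup>2 \<le> 2 * (norm (x - a))\<^sup>2 + 2 * (norm (y - a))\<^sup>2"
proof -
  have "norm (x - y) \<le> norm (x - a) + norm (y - a)"
    using norm_triangle_ineq4[of "x - a" "y - a"] by simp
  then have "(norm (x - y))\<^sup>2 \<le> (norm (x - a) + norm (y - a))\<^sup>2"
    by (rule power_mono) simp
  then show ?thesis
    using power2_add_le order_trans by blast
qed

lemma sum_le_mult_sum:
  fixes v w :: "'a \<Rightarrow> real"
  assumes "\<And>j. j \<in> J \<Longrightarrow> v j \<le> C * w j"
  shows "(\<Sum>j\<in>J. v j) \<le> C * (\<Sum>j\<in>J. w j)"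
  using sum_mono[OF assms] by (simp add: sum_distrib_left)

section \<open>Characters and periodic sequences\<close>

definition e2pi :: "real \<Rightarrow> complex" where
  "e2pi x = cis (2 * pi * x)"

lemma e2pi_add: "e2pi (x + y) = e2pi x * e2pi y"
  by (simp add: e2pi_def cis_mult distrib_left)

lemma norm_e2pi [simp]: "norm (e2pi x) = 1"
  by (simp add: e2pi_def)

lemma cnj_e2pi: "cnj (e2pi x) = e2pi (- x)"
  by (simp add: e2pi_def cis_cnj)

lemma e2pi_power: "e2pi x ^ n = e2pi (real n * x)"
  unfolding e2pi_def Complex.DeMoivre by (simp add: ac_simps)

lemma e2pi_eq_1_iff: "e2pi x = 1 \<longleftrightarrow> x \<in> \<int>"
proof
  assume "e2pi x = 1"
  then have "cos (2 * pi * x) = 1"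
    by (metis cis.sel(1) e2pi_def one_complex.sel(1))
  then obtain n :: int where "2 * pi * x = real_of_int n * 2 * pi"
    using cos_one_2pi_int by blast
  then show "x \<in> \<int>" by simp
qed (auto simp: e2pi_def elim: Ints_cases)

lemma e2pi_Ints [simp]: "x \<in> \<int> \<Longrightarrow> e2pi x = 1"
  by (simp add: e2pi_eq_1_iff)

lemma exp_eq_e2pi: "exp (2 * of_real pi * \<i> * of_nat n * of_real k) = e2pi (real n * k)"
  unfolding e2pi_def cis_conv_exp by (simp add: ac_simps)

lemma sum_e2pi_geometric:
  assumes "real m * x \<in> \<int>"
  shows "(\<Sum>q<m. e2pi (real q * x)) = (if x \<in> \<int> then of_nat m else 0)"
proof (cases "x \<in> \<int>")
  case True
  then have "real q * x \<in> \<int>" for q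
    by simp
  with True show ?thesis
    by simp
next
  case False
  then have "e2pi x \<noteq> 1" by (simp add: e2pi_eq_1_iff)
  moreover have "e2pi x ^ m = 1"
    using assms by (simp add: e2pi_power e2pi_eq_1_iff)
  ultimately show ?thesis
    using False by (simp add: geometric_sum flip: e2pi_power)
qed

definition has_period :: "nat \<Rightarrow> (int \<Rightarrow> 'a) \<Rightarrow> bool" where
  "has_period N f \<longleftrightarrow> (\<forall>n. f (n + int N) = f n)"

lemma has_period_comp: "has_period N f \<Longrightarrow> has_period N (\<lambda>n. g (f n))"
  by (simp add: has_period_def)

lemma has_period_mult:
  assumes "has_period N f"
  shows "f (n + int N * q) = f n"
proof (induction q rule: int_induct[where k = 0])
  case (step1 q)
  then show ?case
    using assms[unfolded has_period_def, rule_format, of "n + int N * q"] by (simp add: algebra_simps)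
next
  case (step2 q)
  then show ?case
    using assms[unfolded has_period_def, rule_format, of "n + int N * (q - 1)"] by (simp add: algebra_simps)
qed simp

lemma sum_shift_has_period:
  fixes f :: "int \<Rightarrow> 'a::ab_group_add"
  assumes "has_period N f"
  shows "(\<Sum>n<N. f (int n + s)) = (\<Sum>n<N. f (int n))"
proof -
  have step: "(\<Sum>n<N. f (int n + (s + 1))) = (\<Sum>n<N. f (int n + s))" for s
  proof -
    have "(\<Sum>n<N. f (int (Suc n) + s) - f (int n + s)) = f (int N + s) - f (int 0 + s)"
      by (rule sum_lessThan_telescope)
    also have "\<dots> = 0"
      using assms by (simp add: has_period_def add.commute)
    finally show ?thesis
      by (simp add: sum_subtractf ac_simps)
  qed
  show ?thesis
  proof (induction s rule: int_induct[where k = 0])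
    case (step1 s)
    then show ?case using step by simp
  next
    case (step2 s)
    then show ?case using step[of "s - 1"] by simp
  qed simp
qed

lemma Uper_has_period:
  assumes "u \<in> Uper"
  shows "per u > 0" and "has_period (per u) u"
proof -
  have "\<exists>N. N > 0 \<and> (\<forall>n. u (n + int N) = u n)"
    using assms by (simp add: Uper_def)
  from LeastI_ex[OF this] show "per u > 0" and "has_period (per u) u"
    by (simp_all add: per_def has_period_def)
qed

section \<open>The discrete Fourier transform\<close>

definition dft :: "nat \<Rightarrow> (int \<Rightarrow> complex) \<Rightarrow> real \<Rightarrow> complex" where
  "dft N f k = (\<Sum>n<N. e2pi (real n * k) * f (int n)) / of_nat N"

lemma dft_diff: "dft N (\<lambda>n. f n - g n) k = dft N f k - dft N g k"
  by (simp add: dft_def sum_subtractf right_diff_distrib diff_divide_distrib)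

lemma dft_cmult: "dft N (\<lambda>n. c * f n) k = c * dft N f k"
  by (simp add: dft_def sum_distrib_left algebra_simps)

lemma dft_shift:
  assumes "has_period N f" and "real N * k \<in> \<int>"
  shows "dft N (\<lambda>n. f (n + s)) k = e2pi (- (of_int s * k)) * dft N f k"
proof -
  define g where "g n = e2pi (of_int n * k) * f n" for n
  have "has_period N g"
    using assms by (simp add: has_period_def g_def algebra_simps e2pi_add e2pi_eq_1_iff)
  have "(\<Sum>n<N. e2pi (real n * k) * f (int n + s)) = e2pi (- (of_int s * k)) * (\<Sum>n<N. g (int n + s))"
    unfolding sum_distrib_left
    by (intro sum.cong refl) (simp add: g_def algebra_simps flip: e2pi_add)
  also have "(\<Sum>n<N. g (int n + s)) = (\<Sum>n<N. e2pi (real n * k) * f (int n))"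
    using sum_shift_has_period[OF \<open>has_period N g\<close>] by (simp add: g_def)
  finally show ?thesis
    by (simp add: dft_def)
qed

lemma sum_e2pi_orthogonal:
  assumes "n < N" and "m < N"
  shows "(\<Sum>j<N. e2pi (real n * (real j / real N)) * cnj (e2pi (real m * (real j / real N))))
    = (if n = m then of_nat N else 0)"
proof -
  have "N > 0"
    using assms by simp
  have "(\<Sum>j<N. e2pi (real n * (real j / real N)) * cnj (e2pi (real m * (real j / real N))))
      = (\<Sum>j<N. e2pi (real j * ((real n - real m) / real N)))"
    by (intro sum.cong refl) (simp add: cnj_e2pi algebra_simps diff_divide_distrib flip: e2pi_add)
  also have "\<dots> = (if (real n - real m) / real N \<in> \<int> then of_nat N else 0)"
    using \<open>N > 0\<close> by (intro sum_e2pi_geometric) simp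
  also have "((real n - real m) / real N \<in> \<int>) \<longleftrightarrow> n = m"
  proof
    assume "(real n - real m) / real N \<in> \<int>"
    then obtain z where z: "real n - real m = of_int z * real N"
      using \<open>N > 0\<close> by (elim Ints_cases) (simp add: field_simps)
    with assms have "\<bar>of_int z * real N\<bar> < real N"
      by linarith
    with \<open>N > 0\<close> have "z = 0"
      by (simp add: abs_mult)
    with z show "n = m"
      by simp
  qed simp
  finally show ?thesis .
qed

lemma dft_parseval:
  assumes "N > 0"
  shows "(\<Sum>j<N. (cmod (dft N f (real j / real N)))\<^sup>2) = (\<Sum>n<N. (cmod (f (int n)))\<^sup>2) / real N"
proof -
  define w where "w n j = e2pi (real n * (real j / real N))" for n j
  have orth: "(\<Sum>j<N. w n j * cnj (w m j)) = (if n = m then of_nat N else 0)" if "n < N" "m < N" for n m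
    unfolding w_def by (rule sum_e2pi_orthogonal[OF that])
  have scaled: "of_nat N * dft N f (real j / real N) = (\<Sum>n<N. w n j * f (int n))" for j
    using assms by (simp add: dft_def w_def)
  have "complex_of_real ((real N)\<^sup>2 * (\<Sum>j<N. (cmod (dft N f (real j / real N)))\<^sup>2))
      = (\<Sum>j<N. (of_nat N * dft N f (real j / real N)) * cnj (of_nat N * dft N f (real j / real N)))"
    by (simp only: of_real_mult of_real_sum complex_norm_square)
      (simp add: sum_distrib_left algebra_simps power2_eq_square)
  also have "\<dots> = (\<Sum>j<N. \<Sum>n<N. \<Sum>m<N. f (int n) * cnj (f (int m)) * (w n j * cnj (w m j)))"
    unfolding scaled cnj_sum sum_product by (simp add: algebra_simps)
  also have "\<dots> = (\<Sum>n<N. \<Sum>m<N. \<Sum>j<N. f (int n) * cnj (f (int m)) * (w n j * cnj (w m j)))"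
    by (subst sum.swap, rule sum.cong[OF refl], rule sum.swap)
  also have "\<dots> = (\<Sum>n<N. \<Sum>m<N. f (int n) * cnj (f (int m)) * (\<Sum>j<N. w n j * cnj (w m j)))"
    by (simp add: sum_distrib_left)
  also have "\<dots> = (\<Sum>n<N. f (int n) * cnj (f (int n)) * of_nat N)"
    by (intro sum.cong refl) (simp add: orth if_distrib cong: if_cong)
  also have "\<dots> = complex_of_real (real N * (\<Sum>n<N. (cmod (f (int n)))\<^sup>2))"
    by (simp only: of_real_mult of_real_sum complex_norm_square of_real_of_nat_eq)
      (simp add: sum_distrib_left algebra_simps)
  finally show ?thesis
    using assms by (simp only: of_real_eq_iff) (simp add: field_simps power2_eq_square)
qed

lemma dft_multiple_period:
  assumes "has_period N f" and "m > 0" and "real (m * N) * k \<in> \<int>"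
  shows "dft (m * N) f k = (if real N * k \<in> \<int> then dft N f k else 0)"
proof -
  have block: "(\<Sum>n\<in>{q * N..<q * N + N}. g n) = (\<Sum>r<N. g (q * N + r))" for g :: "nat \<Rightarrow> complex" and q
    by (simp add: sum.atLeastLessThan_shift_0[of _ "q * N"] atLeast0LessThan)
  have "(\<Sum>n<m * N. e2pi (real n * k) * f (int n))
      = (\<Sum>q<m. \<Sum>r<N. e2pi (real (q * N + r) * k) * f (int (q * N + r)))"
    by (simp add: sum.nat_group[symmetric] block)
  also have "\<dots> = (\<Sum>q<m. e2pi (real q * (real N * k))) * (\<Sum>r<N. e2pi (real r * k) * f (int r))"
    unfolding sum_product
  proof (intro sum.cong refl)
    fix q r
    have "f (int (q * N + r)) = f (int r + int N * int q)"
      by (simp add: algebra_simps)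
    then show "e2pi (real (q * N + r) * k) * f (int (q * N + r))
        = e2pi (real q * (real N * k)) * (e2pi (real r * k) * f (int r))"
      by (simp add: has_period_mult[OF assms(1)] algebra_simps flip: e2pi_add)
  qed
  also have "(\<Sum>q<m. e2pi (real q * (real N * k))) = (if real N * k \<in> \<int> then of_nat m else 0)"
    using assms(3) by (intro sum_e2pi_geometric) (simp add: mult.assoc)
  finally show ?thesis
    using assms(2) by (simp add: dft_def)
qed

lemma uhat_eq_dft:
  assumes "u \<in> Uper" and "k \<in> Qk"
  obtains M where "M > 0" and "real M * k \<in> \<int>" and "has_period M u"
    and "uhat u k $ i = dft M (\<lambda>n. of_real (u n $ i)) k"
proof -
  define P where "P M \<longleftrightarrow> M > 0 \<and> real M * k \<in> \<int> \<and> (\<forall>n. u (n + int M) = u n)" for M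
  have N: "per u > 0" "has_period (per u) u"
    using Uper_has_period[OF assms(1)] by simp_all
  obtain a q where q: "q > 0" "k = of_int a / of_int q"
    using assms(2) by (auto simp: Qk_def elim: Rats_cases')
  have "P (nat q * per u)"
    unfolding P_def
  proof (intro conjI allI)
    show "nat q * per u > 0"
      using N q by simp
    have "real (nat q) * k = of_int a"
      using q by (simp add: field_simps)
    then have "real (nat q * per u) * k = real (per u) * of_int a"
      by (simp add: algebra_simps)
    then show "real (nat q * per u) * k \<in> \<int>"
      by (metis Ints_mult Ints_of_int Ints_of_nat)
    show "u (n + int (nat q * per u)) = u n" for n
      using has_period_mult[OF N(2), of n "int (nat q)"] by (simp add: mult.commute)
  qed
  then have "P (Least P)"
    by (rule LeastI)
  then show ?thesis
    by (intro that[of "Least P"])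
      (simp_all add: P_def[abs_def] has_period_def uhat_def dft_def exp_eq_e2pi Let_def)
qed

(* The period used in the definition of uhat and per u need not divide each other;
   both transforms agree with the transform over their product. *)

lemma uhat_component:
  assumes "u \<in> Uper" and "k \<in> Qk"
  shows "uhat u k $ i
    = (if real (per u) * k \<in> \<int> then dft (per u) (\<lambda>n. of_real (u n $ i)) k else 0)"
proof -
  obtain M where M: "M > 0" "real M * k \<in> \<int>" "has_period M u"
    and uhat: "uhat u k $ i = dft M (\<lambda>n. of_real (u n $ i)) k"
    using uhat_eq_dft[OF assms] .
  define N where "N = per u"
  define f where "f = (\<lambda>n. complex_of_real (u n $ i))"
  have "N > 0" "has_period N f" "has_period M f"
    using Uper_has_period[OF assms(1)] M(3) by (simp_all add: N_def f_def has_period_def)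
  have "real (M * N) * k \<in> \<int>"
    using Ints_mult[OF M(2) Ints_of_nat[of N]] by (simp add: ac_simps)
  have "uhat u k $ i = dft (M * N) f k"
    using uhat dft_multiple_period[OF \<open>has_period M f\<close> \<open>N > 0\<close>, of k] M(2) \<open>real (M * N) * k \<in> \<int>\<close>
    by (simp add: f_def mult.commute)
  also have "\<dots> = (if real N * k \<in> \<int> then dft N f k else 0)"
    using dft_multiple_period[OF \<open>has_period N f\<close> M(1) \<open>real (M * N) * k \<in> \<int>\<close>] .
  finally show ?thesis
    by (simp add: N_def f_def)
qed

lemma infsum_Qk_eq_sum_grid:
  fixes \<phi> :: "real \<Rightarrow> real"
  assumes "N > 0" and "\<And>k. k \<in> Qk \<Longrightarrow> real N * k \<notin> \<int> \<Longrightarrow> \<phi> k = 0"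
  shows "infsum \<phi> Qk = (\<Sum>j<N. \<phi> (real j / real N))"
proof -
  define K where "K = (\<lambda>j. real j / real N) ` {..<N}"
  have "K \<subseteq> Qk"
    using assms(1) by (auto simp: K_def Qk_def)
  moreover have "\<phi> k = 0" if "k \<in> Qk - K" for k
  proof (rule assms(2))
    show "k \<in> Qk" using that by simp
    show "real N * k \<notin> \<int>"
    proof
      assume "real N * k \<in> \<int>"
      then obtain z where z: "real N * k = of_int z"
        by (elim Ints_cases)
      have "0 \<le> real N * k" "real N * k < real N"
        using that assms(1) by (auto simp: Qk_def)
      with z have "0 \<le> z" "z < int N"
        by simp_all
      with z assms(1) have "k \<in> K"
        unfolding K_def by (intro image_eqI[of _ _ "nat z"]) (auto simp: field_simps)
      with that show False by simp
    qed
  qed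
  ultimately have "infsum \<phi> Qk = infsum \<phi> K"
    by (intro infsum_cong_neutral) auto
  also have "\<dots> = (\<Sum>j<N. \<phi> (real j / real N))"
    using assms(1) by (simp add: K_def sum.reindex inj_on_def)
  finally show ?thesis .
qed

section \<open>Symbols of difference operators\<close>

definition chord :: "real \<Rightarrow> real" where
  "chord x = cmod (e2pi x - 1)"

lemma chord_nonneg [simp]: "0 \<le> chord x"
  by (simp add: chord_def)

lemma chord_le_2: "chord x \<le> 2"
  using norm_triangle_ineq4[of "e2pi x" 1] by (simp add: chord_def)

lemma chord_minus [simp]: "chord (- x) = chord x"
proof -
  have "e2pi (- x) - 1 = cnj (e2pi x - 1)"
    by (simp add: cnj_e2pi)
  then show ?thesis
    by (simp only: chord_def complex_mod_cnj)
qed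

lemma chord_add_le: "chord (x + y) \<le> chord x + chord y"
proof -
  have "e2pi (x + y) - 1 = e2pi x * (e2pi y - 1) + (e2pi x - 1)"
    by (simp add: e2pi_add algebra_simps)
  then have "chord (x + y) \<le> cmod (e2pi x * (e2pi y - 1)) + cmod (e2pi x - 1)"
    unfolding chord_def by (metis norm_triangle_ineq)
  then show ?thesis
    by (simp add: chord_def norm_mult add.commute)
qed

lemma chord_add_of_int [simp]: "chord (x + of_int n) = chord x"
  by (simp add: chord_def e2pi_add)

lemma chord_of_nat_mult_le: "chord (real n * x) \<le> real n * chord x"
proof (induction n)
  case (Suc n)
  have "chord (real (Suc n) * x) \<le> chord (real n * x) + chord x"
    using chord_add_le[of "real n * x" x] by (simp add: algebra_simps)
  with Suc show ?case
    by (simp add: algebra_simps)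
qed (simp add: chord_def)

lemma chord_of_int_mult_le: "chord (of_int n * x) \<le> \<bar>of_int n\<bar> * chord x"
  using chord_of_nat_mult_le[of "nat \<bar>n\<bar>" x] chord_minus[of "of_int n * x"]
  by (cases "n \<ge> 0") simp_all

lemma chord_sum_le: "chord (\<Sum>h\<in>A. x h) \<le> (\<Sum>h\<in>A. chord (x h))"
proof (induction A rule: infinite_finite_induct)
  case (insert a A)
  then show ?case
    using chord_add_le[of "x a" "sum x A"] by simp
qed (simp_all add: chord_def)

lemma chord_eq_sin: "chord x = 2 * \<bar>sin (pi * x)\<bar>"
proof -
  have "(chord x)\<^sup>2 = (cos (2 * pi * x) - 1)\<^sup>2 + (sin (2 * pi * x))\<^sup>2"
    by (simp add: chord_def e2pi_def cmod_def)
  also have "\<dots> = 2 - 2 * cos (2 * (pi * x))"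
    by (simp add: power2_eq_square algebra_simps)
  also have "\<dots> = (2 * \<bar>sin (pi * x)\<bar>)\<^sup>2"
    by (simp add: cos_double_sin power_mult_distrib)
  finally show ?thesis
    by (rule power2_eq_imp_eq) simp_all
qed

lemma sin_ge_third:
  fixes x :: real
  assumes "0 \<le> x" and "x \<le> 2"
  shows "x / 3 \<le> sin x"
proof -
  have "\<bar>sin x - x\<bar> \<le> x ^ 3 / 6"
    using Maclaurin_sin_bound[of x 3] assms by (simp add: sin_coeff_def eval_nat_numeral)
  then have "x - x ^ 3 / 6 \<le> sin x"
    by (simp only: abs_le_iff) linarith
  moreover have "x ^ 3 \<le> x * 4"
    using assms mult_left_mono[of "x * x" 4 x] mult_mono[of x 2 x 2]
    by (simp add: power3_eq_cube)
  ultimately show ?thesis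
    by simp
qed

lemma absk_nonneg: "0 \<le> absk x"
  by (simp add: absk_def infdist_nonneg)

lemma absk_eq_round: "absk x = \<bar>x - of_int (round x)\<bar>"
proof (rule antisym)
  show "absk x \<le> \<bar>x - of_int (round x)\<bar>"
    unfolding absk_def by (rule infdist_le2[of "of_int (round x)"]) (auto simp: dist_real_def)
  have "\<bar>x - of_int (round x)\<bar> \<le> dist x a" if "a \<in> \<int>" for a
    using that round_diff_minimal[of x] by (auto simp: dist_real_def elim!: Ints_cases)
  then show "\<bar>x - of_int (round x)\<bar> \<le> absk x"
    unfolding absk_def by (subst infdist_notempty) (auto intro: cINF_greatest)
qed

lemma chord_absk_bounds: "2 * absk x \<le> chord x" "chord x \<le> 2 * pi * absk x"
proof -
  define a where "a = x - of_int (round x)"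
  have absk_a: "absk x = \<bar>a\<bar>" "\<bar>a\<bar> \<le> 1/2"
    using of_int_round_abs_le[of x] by (simp_all add: a_def absk_eq_round abs_minus_commute)
  have "pi * \<bar>a\<bar> \<le> pi"
    using absk_a(2) by simp
  have "\<bar>sin (pi * a)\<bar> = \<bar>sin (pi * \<bar>a\<bar>)\<bar>"
    by (cases "a \<ge> 0") simp_all
  also have "\<dots> = sin (pi * \<bar>a\<bar>)"
    using sin_ge_zero[OF _ \<open>pi * \<bar>a\<bar> \<le> pi\<close>] by simp
  finally have sin_a: "\<bar>sin (pi * a)\<bar> = sin (pi * \<bar>a\<bar>)" .
  have "chord x = chord a"
    using chord_add_of_int[of a "round x"] by (simp add: a_def)
  with sin_a have chord_a: "chord x = 2 * sin (pi * \<bar>a\<bar>)"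
    by (simp add: chord_eq_sin)
  have "pi * \<bar>a\<bar> \<le> 2"
    using absk_a(2) pi_less_4 mult_mono[of pi 4 "\<bar>a\<bar>" "1/2"] by simp
  then have "pi * \<bar>a\<bar> / 3 \<le> sin (pi * \<bar>a\<bar>)"
    by (intro sin_ge_third) simp_all
  then show "2 * absk x \<le> chord x"
    using pi_gt3 mult_right_mono[of 3 pi "\<bar>a\<bar>"] by (simp add: chord_a absk_a)
  show "chord x \<le> 2 * pi * absk x"
    using sin_x_le_x[of "pi * \<bar>a\<bar>"] by (simp add: chord_a absk_a)
qed

lemma sum_chord_sq_le:
  "(\<Sum>h\<in>R. (chord (of_int h * k))\<^sup>2) \<le> 4 * pi\<^sup>2 * (\<Sum>h\<in>R. (of_int h)\<^sup>2) * (absk k)\<^sup>2"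
proof -
  have "(chord (of_int h * k))\<^sup>2 \<le> (of_int h)\<^sup>2 * (4 * pi\<^sup>2 * (absk k)\<^sup>2)" for h
  proof -
    have "chord (of_int h * k) \<le> \<bar>of_int h\<bar> * (2 * pi * absk k)"
      using chord_of_int_mult_le[of h k] chord_absk_bounds(2)[of k]
      by (meson abs_ge_zero mult_left_mono order_trans)
    then have "(chord (of_int h * k))\<^sup>2 \<le> (\<bar>of_int h\<bar> * (2 * pi * absk k))\<^sup>2"
      by (rule power_mono) simp
    then show ?thesis
      by (simp add: power_mult_distrib)
  qed
  then have "(\<Sum>h\<in>R. (chord (of_int h * k))\<^sup>2) \<le> (\<Sum>h\<in>R. (of_int h)\<^sup>2 * (4 * pi\<^sup>2 * (absk k)\<^sup>2))"
    by (rule sum_mono)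
  then show ?thesis
    by (simp only: sum_distrib_right[symmetric]) (simp add: mult_ac)
qed

lemma absk_sq_le_sum_chord_sq:
  assumes "finite R" and "A \<subseteq> R" and "(\<Sum>h\<in>A. c h * h) = 1"
  shows "4 * (absk k)\<^sup>2 \<le> (\<Sum>h\<in>A. (of_int (c h))\<^sup>2) * (\<Sum>h\<in>R. (chord (of_int h * k))\<^sup>2)"
proof -
  have "k = (\<Sum>h\<in>A. of_int (c h) * (of_int h * k))"
    using arg_cong[OF assms(3), of "\<lambda>z. of_int z * k"] by (simp add: sum_distrib_right mult.assoc)
  then have "chord k \<le> (\<Sum>h\<in>A. chord (of_int (c h) * (of_int h * k)))"
    using chord_sum_le[of "\<lambda>h. of_int (c h) * (of_int h * k)" A] by simp
  also have "\<dots> \<le> (\<Sum>h\<in>A. \<bar>of_int (c h)\<bar> * chord (of_int h * k))"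
    by (intro sum_mono chord_of_int_mult_le)
  finally have "(chord k)\<^sup>2 \<le> (\<Sum>h\<in>A. \<bar>of_int (c h)\<bar> * chord (of_int h * k))\<^sup>2"
    by (rule power_mono) simp
  also have "\<dots> \<le> (\<Sum>h\<in>A. (of_int (c h))\<^sup>2) * (\<Sum>h\<in>A. (chord (of_int h * k))\<^sup>2)"
    using Cauchy_Schwarz_ineq_sum[of "\<lambda>h. \<bar>of_int (c h)\<bar>" _ A] by simp
  also have "\<dots> \<le> (\<Sum>h\<in>A. (of_int (c h))\<^sup>2) * (\<Sum>h\<in>R. (chord (of_int h * k))\<^sup>2)"
    using assms(1,2) by (intro mult_left_mono sum_mono2) (simp_all add: sum_nonneg)
  moreover have "(2 * absk k)\<^sup>2 \<le> (chord k)\<^sup>2"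
    using chord_absk_bounds(1)[of k] absk_nonneg[of k] by (intro power_mono) simp_all
  ultimately show ?thesis
    by (simp add: power_mult_distrib)
qed

definition diff_symbol :: "int \<Rightarrow> real \<Rightarrow> int \<Rightarrow> real \<Rightarrow> complex" where
  "diff_symbol h t b k = (e2pi (- (of_int h * k)) - 1) - of_real t * (e2pi (- (of_int b * k)) - 1)"

lemma dft_diff_symbol:
  assumes "has_period N f" and "real N * k \<in> \<int>"
  shows "dft N (\<lambda>n. (f (n + h) - f n) - of_real t * (f (n + b) - f n)) k = diff_symbol h t b k * dft N f k"
  by (simp only: dft_diff dft_cmult dft_shift[OF assms]) (simp add: diff_symbol_def algebra_simps)

lemma norm_e2pi_minus_1: "cmod (e2pi x - 1) = chord x"
  by (simp add: chord_def)

lemma norm_diff_symbol_0 [simp]: "cmod (diff_symbol h 0 b k) = chord (of_int h * k)"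
  using chord_minus[of "of_int h * k"] by (simp add: diff_symbol_def chord_def)

lemma norm_second_diff_symbol_le:
  "cmod (diff_symbol h (of_int h) 1 k) \<le> (of_int h)\<^sup>2 * (chord k)\<^sup>2"
proof -
  define P where "P h = cmod (diff_symbol h (of_int h) 1 k)" for h
  have step: "P (h + 1) \<le> P h + \<bar>of_int h\<bar> * (chord k)\<^sup>2"
    "P h \<le> P (h + 1) + \<bar>of_int h\<bar> * (chord k)\<^sup>2" for h
  proof -
    define X where "X = (e2pi (- (of_int h * k)) - 1) * (e2pi (- k) - 1)"
    have eq: "diff_symbol (h + 1) (of_int (h + 1)) 1 k = diff_symbol h (of_int h) 1 k + X"
      using e2pi_add[of "- (of_int h * k)" "- k"] by (simp add: X_def diff_symbol_def algebra_simps)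
    have "cmod X = chord (of_int h * k) * chord k"
      by (simp add: X_def norm_mult norm_e2pi_minus_1)
    also have "\<dots> \<le> \<bar>of_int h\<bar> * (chord k)\<^sup>2"
      using mult_right_mono[OF chord_of_int_mult_le[of h k], of "chord k"]
      by (simp add: power2_eq_square mult.assoc)
    finally have X: "cmod X \<le> \<bar>of_int h\<bar> * (chord k)\<^sup>2" .
    show "P (h + 1) \<le> P h + \<bar>of_int h\<bar> * (chord k)\<^sup>2"
      unfolding P_def eq using norm_triangle_ineq[of "diff_symbol h (of_int h) 1 k" X] X by linarith
    show "P h \<le> P (h + 1) + \<bar>of_int h\<bar> * (chord k)\<^sup>2"
      unfolding P_def eq using norm_triangle_ineq4[of "diff_symbol h (of_int h) 1 k + X" X] X by simp
  qed
  show ?thesis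
    unfolding P_def[symmetric]
  proof (induction h rule: int_induct[where k = 0])
    case base
    then show ?case by (simp add: P_def diff_symbol_def)
  next
    case (step1 h)
    have "P (h + 1) \<le> ((of_int h)\<^sup>2 + \<bar>of_int h\<bar>) * (chord k)\<^sup>2"
      using step(1)[of h] step1.IH by (simp add: algebra_simps)
    also have "\<dots> \<le> (of_int (h + 1))\<^sup>2 * (chord k)\<^sup>2"
      using step1.hyps by (intro mult_right_mono) (simp_all add: power2_eq_square algebra_simps)
    finally show ?case .
  next
    case (step2 h)
    have "P (h - 1) \<le> ((of_int h)\<^sup>2 + \<bar>of_int (h - 1)\<bar>) * (chord k)\<^sup>2"
      using step(2)[of "h - 1"] step2.IH by (simp add: algebra_simps)
    also have "\<dots> \<le> (of_int (h - 1))\<^sup>2 * (chord k)\<^sup>2"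
      using step2.hyps by (intro mult_right_mono) (simp_all add: power2_eq_square algebra_simps)
    finally show ?case .
  qed
qed

lemma sum_second_diff_symbol_sq_le:
  "(\<Sum>h\<in>R. (cmod (diff_symbol h (of_int h) 1 k))\<^sup>2) \<le> 16 * pi ^ 4 * (\<Sum>h\<in>R. (of_int h) ^ 4) * (absk k) ^ 4"
proof -
  have "(cmod (diff_symbol h (of_int h) 1 k))\<^sup>2 \<le> (of_int h) ^ 4 * (16 * pi ^ 4 * (absk k) ^ 4)" for h
  proof -
    have "chord k \<le> 2 * pi * absk k"
      by (rule chord_absk_bounds(2))
    then have "(chord k)\<^sup>2 \<le> (2 * pi * absk k)\<^sup>2"
      by (rule power_mono) simp
    then have "cmod (diff_symbol h (of_int h) 1 k) \<le> (of_int h)\<^sup>2 * (2 * pi * absk k)\<^sup>2"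
      using norm_second_diff_symbol_le[of h k] by (meson mult_left_mono order_trans zero_le_power2)
    then have "(cmod (diff_symbol h (of_int h) 1 k))\<^sup>2 \<le> ((of_int h)\<^sup>2 * (2 * pi * absk k)\<^sup>2)\<^sup>2"
      by (rule power_mono) simp
    then show ?thesis
      by (simp add: power_mult_distrib flip: power_mult)
  qed
  then have "(\<Sum>h\<in>R. (cmod (diff_symbol h (of_int h) 1 k))\<^sup>2) \<le> (\<Sum>h\<in>R. (of_int h) ^ 4 * (16 * pi ^ 4 * (absk k) ^ 4))"
    by (rule sum_mono)
  then show ?thesis
    by (simp only: sum_distrib_right[symmetric]) (simp add: mult_ac)
qed

lemma chord_sq_le_diff_symbol:
  "(chord (of_int h * k))\<^sup>2 \<le> 2 * (cmod (diff_symbol h t b k))\<^sup>2 + 2 * t\<^sup>2 * (chord (of_int b * k))\<^sup>2"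
proof -
  have "chord (of_int h * k) = cmod (diff_symbol h t b k + of_real t * (e2pi (- (of_int b * k)) - 1))"
    by (simp add: diff_symbol_def norm_e2pi_minus_1)
  also have "\<dots> \<le> cmod (diff_symbol h t b k) + \<bar>t\<bar> * chord (of_int b * k)"
    by (rule order_trans[OF norm_triangle_ineq]) (simp add: norm_mult norm_e2pi_minus_1)
  finally have "(chord (of_int h * k))\<^sup>2 \<le> (cmod (diff_symbol h t b k) + \<bar>t\<bar> * chord (of_int b * k))\<^sup>2"
    by (rule power_mono) simp
  also have "\<dots> \<le> 2 * (cmod (diff_symbol h t b k))\<^sup>2 + 2 * t\<^sup>2 * (chord (of_int b * k))\<^sup>2"
    using power2_add_le[of "cmod (diff_symbol h t b k)" "\<bar>t\<bar> * chord (of_int b * k)"]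
    by (simp add: power_mult_distrib)
  finally show ?thesis .
qed

lemma chord_mult_chord_sq_le_diff_symbol:
  assumes "b \<noteq> 0"
  shows "(chord (of_int h * k) * chord (of_int b * k))\<^sup>2
    \<le> 2 * (cmod (diff_symbol (h + b) (of_int (h + b) / of_int b) b k))\<^sup>2
      + 2 * (cmod (diff_symbol h (of_int h / of_int b) b k))\<^sup>2"
proof -
  have e: "e2pi (- (of_int (h + b) * k)) = e2pi (- (of_int h * k)) * e2pi (- (of_int b * k))"
    using e2pi_add[of "- (of_int h * k)" "- (of_int b * k)"] by (simp add: algebra_simps)
  have "(e2pi (- (of_int h * k)) - 1) * (e2pi (- (of_int b * k)) - 1)
      = diff_symbol (h + b) (of_int (h + b) / of_int b) b k - diff_symbol h (of_int h / of_int b) b k"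
    unfolding diff_symbol_def e using assms by (simp add: add_divide_distrib algebra_simps)
  then have "chord (of_int h * k) * chord (of_int b * k)
      = cmod (diff_symbol (h + b) (of_int (h + b) / of_int b) b k - diff_symbol h (of_int h / of_int b) b k)"
    by (metis norm_mult norm_e2pi_minus_1 chord_minus)
  also have "\<dots> \<le> cmod (diff_symbol (h + b) (of_int (h + b) / of_int b) b k)
      + cmod (diff_symbol h (of_int h / of_int b) b k)"
    by (rule norm_triangle_ineq4)
  finally have "(chord (of_int h * k) * chord (of_int b * k))\<^sup>2 \<le> (cmod (diff_symbol (h + b) (of_int (h + b) / of_int b) b k)
      + cmod (diff_symbol h (of_int h / of_int b) b k))\<^sup>2"
    by (rule power_mono) simp
  then show ?thesis
    using power2_add_le order_trans by blast
qed

lemma sum_chord_sq_le_sum_diff_symbol: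
  assumes "finite R" and "A \<subseteq> R"
  shows "(\<Sum>h\<in>A. (chord (of_int h * k))\<^sup>2)
    \<le> 2 * (\<Sum>h\<in>R. (cmod (diff_symbol h (of_int h / of_int b) b k))\<^sup>2)
      + 2 * (\<Sum>h\<in>A. (of_int h / of_int b)\<^sup>2) * (chord (of_int b * k))\<^sup>2"
proof -
  define m where "m h = (cmod (diff_symbol h (of_int h / of_int b) b k))\<^sup>2" for h
  have "(\<Sum>h\<in>A. (chord (of_int h * k))\<^sup>2)
      \<le> (\<Sum>h\<in>A. 2 * m h + 2 * (of_int h / of_int b)\<^sup>2 * (chord (of_int b * k))\<^sup>2)"
    unfolding m_def by (intro sum_mono chord_sq_le_diff_symbol)
  also have "\<dots> = 2 * (\<Sum>h\<in>A. m h) + 2 * (\<Sum>h\<in>A. (of_int h / of_int b)\<^sup>2) * (chord (of_int b * k))\<^sup>2"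
    by (simp add: sum.distrib sum_distrib_left sum_distrib_right mult.assoc)
  also have "(\<Sum>h\<in>A. m h) \<le> (\<Sum>h\<in>R. m h)"
    using assms by (intro sum_mono2) (simp_all add: m_def)
  finally show ?thesis
    by (simp add: m_def)
qed

lemma chord_sq_mult_sum_chord_sq_le_sum_diff_symbol:
  assumes "finite R" and "A \<subseteq> R" and "\<forall>h\<in>A. h + b \<in> R" and "b \<noteq> 0"
  shows "(chord (of_int b * k))\<^sup>2 * (\<Sum>h\<in>A. (chord (of_int h * k))\<^sup>2)
    \<le> 4 * (\<Sum>h\<in>R. (cmod (diff_symbol h (of_int h / of_int b) b k))\<^sup>2)"
proof -
  define m where "m h = (cmod (diff_symbol h (of_int h / of_int b) b k))\<^sup>2" for h
  have "(\<Sum>h\<in>A. m (h + b)) = (\<Sum>h\<in>(\<lambda>h. h + b) ` A. m h)"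
    by (simp add: sum.reindex inj_on_def)
  also have "\<dots> \<le> (\<Sum>h\<in>R. m h)"
    using assms(1,3) by (intro sum_mono2) (auto simp: m_def)
  finally have shifted: "(\<Sum>h\<in>A. m (h + b)) \<le> (\<Sum>h\<in>R. m h)" .
  have "(\<Sum>h\<in>A. m h) \<le> (\<Sum>h\<in>R. m h)"
    using assms(1,2) by (intro sum_mono2) (simp_all add: m_def)
  moreover have "(chord (of_int b * k))\<^sup>2 * (\<Sum>h\<in>A. (chord (of_int h * k))\<^sup>2)
      \<le> 2 * (\<Sum>h\<in>A. m (h + b)) + 2 * (\<Sum>h\<in>A. m h)"
    unfolding sum_distrib_left m_def sum.distrib[symmetric]
    using chord_mult_chord_sq_le_diff_symbol[OF assms(4)]
    by (intro sum_mono) (simp add: power_mult_distrib mult.commute)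
  ultimately show ?thesis
    using shifted by (simp add: m_def)
qed

lemma absk_pow4_le_sum_diff_symbol:
  assumes "finite R" and "A \<subseteq> R" and "\<forall>h\<in>A. h + b \<in> R" and "b \<noteq> 0"
    and "(\<Sum>h\<in>A. c h * h) = 1"
  shows "2 * (absk k)^4 \<le> (\<Sum>h\<in>A. (of_int (c h))\<^sup>2)\<^sup>2 * (real (card A) + (\<Sum>h\<in>A. (of_int h / of_int b)\<^sup>2))
    * (\<Sum>h\<in>R. (cmod (diff_symbol h (of_int h / of_int b) b k))\<^sup>2)"
proof -
  define S where "S = (\<Sum>h\<in>R. (cmod (diff_symbol h (of_int h / of_int b) b k))\<^sup>2)"
  define T where "T = (\<Sum>h\<in>A. (chord (of_int h * k))\<^sup>2)"
  define Y where "Y = (chord (of_int b * k))\<^sup>2"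
  define K where "K = (\<Sum>h\<in>A. (of_int (c h) :: real)\<^sup>2)"
  define B where "B = (\<Sum>h\<in>A. (of_int h / of_int b :: real)\<^sup>2)"
  have "finite A"
    using assms(1,2) finite_subset by blast
  have T_le: "T \<le> 2 * S + 2 * B * Y"
    unfolding S_def T_def Y_def B_def by (rule sum_chord_sq_le_sum_diff_symbol[OF assms(1,2)])
  have YT_le: "Y * T \<le> 4 * S"
    unfolding S_def T_def Y_def by (rule chord_sq_mult_sum_chord_sq_le_sum_diff_symbol[OF assms(1-4)])
  have "T \<le> (\<Sum>h\<in>A. 2\<^sup>2)"
    unfolding T_def by (intro sum_mono power_mono chord_le_2) simp
  then have T_card: "T \<le> 4 * real (card A)"
    by simp
  have "0 \<le> T" "0 \<le> S" "0 \<le> B"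
    by (simp_all add: T_def S_def B_def sum_nonneg)
  have "T\<^sup>2 \<le> T * (2 * S + 2 * B * Y)"
    using T_le \<open>0 \<le> T\<close> by (simp add: power2_eq_square mult_left_mono)
  also have "\<dots> = 2 * (T * S) + 2 * B * (Y * T)"
    by (simp add: algebra_simps)
  also have "\<dots> \<le> 2 * (4 * real (card A) * S) + 2 * B * (4 * S)"
    using T_card YT_le \<open>0 \<le> S\<close> \<open>0 \<le> B\<close> by (intro add_mono mult_left_mono mult_right_mono) simp_all
  finally have T_sq: "T\<^sup>2 \<le> 8 * (real (card A) + B) * S"
    by (simp add: algebra_simps)
  have "4 * (absk k)\<^sup>2 \<le> K * T"
    unfolding K_def T_def by (rule absk_sq_le_sum_chord_sq[OF \<open>finite A\<close> order_refl assms(5)])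
  have "16 * (absk k)^4 = (4 * (absk k)\<^sup>2)\<^sup>2"
    by (simp add: power_mult_distrib flip: power_mult)
  also have "\<dots> \<le> (K * T)\<^sup>2"
    using \<open>4 * (absk k)\<^sup>2 \<le> K * T\<close> by (rule power_mono) simp
  also have "\<dots> \<le> K\<^sup>2 * (8 * (real (card A) + B) * S)"
    using T_sq by (simp add: power_mult_distrib mult_left_mono)
  also have "\<dots> = 8 * (K\<^sup>2 * (real (card A) + B) * S)"
    by (simp add: algebra_simps)
  finally show ?thesis
    unfolding K_def B_def S_def by linarith
qed

lemma weighted_symbols_le_absk:
  assumes "0 \<le> s1" and "0 \<le> s2"
  shows "(\<Sum>h\<in>R. (cmod (diff_symbol h (of_int h) 1 k))\<^sup>2) * s1 + (\<Sum>h\<in>R. (chord (of_int h * k))\<^sup>2) * s2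
    \<le> (16 * pi ^ 4 * (\<Sum>h\<in>R. (of_int h) ^ 4) + 4 * pi\<^sup>2 * (\<Sum>h\<in>R. (of_int h)\<^sup>2))
      * ((absk k)^4 * s1 + (absk k)\<^sup>2 * s2)"
proof -
  define U where "U = 16 * pi ^ 4 * (\<Sum>h\<in>R. (of_int h) ^ 4) + 4 * pi\<^sup>2 * (\<Sum>h\<in>R. (of_int h :: real)\<^sup>2)"
  have "(\<Sum>h\<in>R. (cmod (diff_symbol h (of_int h) 1 k))\<^sup>2) \<le> U * (absk k)^4"
    using sum_second_diff_symbol_sq_le[of k R]
    by (simp add: U_def distrib_right sum_nonneg add_increasing2)
  moreover have "(\<Sum>h\<in>R. (chord (of_int h * k))\<^sup>2) \<le> U * (absk k)\<^sup>2"
    using sum_chord_sq_le[of k R]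
    by (simp add: U_def distrib_right sum_nonneg add_increasing)
  ultimately show ?thesis
    using assms by (simp add: U_def[symmetric] distrib_left add_mono mult_right_mono flip: mult.assoc)
qed

lemma absk_le_weighted_symbols:
  assumes "finite R" and "A \<subseteq> R" and "\<forall>h\<in>A. h + b \<in> R" and "b \<noteq> 0"
    and "(\<Sum>h\<in>A. c h * h) = 1" and "0 \<le> s1" and "0 \<le> s2"
  shows "(absk k)^4 * s1 + (absk k)\<^sup>2 * s2
    \<le> ((\<Sum>h\<in>A. (of_int (c h))\<^sup>2)\<^sup>2 * (real (card A) + (\<Sum>h\<in>A. (of_int h / of_int b)\<^sup>2))
        + (\<Sum>h\<in>A. (of_int (c h))\<^sup>2))
      * ((\<Sum>h\<in>R. (cmod (diff_symbol h (of_int h / of_int b) b k))\<^sup>2) * s1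
        + (\<Sum>h\<in>R. (chord (of_int h * k))\<^sup>2) * s2)"
proof -
  define K where "K = (\<Sum>h\<in>A. (of_int (c h) :: real)\<^sup>2)"
  define Q where "Q = K\<^sup>2 * (real (card A) + (\<Sum>h\<in>A. (of_int h / of_int b)\<^sup>2))"
  define S where "S = (\<Sum>h\<in>R. (cmod (diff_symbol h (of_int h / of_int b) b k))\<^sup>2)"
  define W where "W = (\<Sum>h\<in>R. (chord (of_int h * k))\<^sup>2)"
  have "0 \<le> K" "0 \<le> Q" "0 \<le> S" "0 \<le> W"
    by (simp_all add: K_def Q_def S_def W_def sum_nonneg)
  have "(absk k)^4 \<le> Q * S"
    using absk_pow4_le_sum_diff_symbol[OF assms(1-5), of k] zero_le_power[OF absk_nonneg, of k 4]
    unfolding Q_def K_def S_def by linarith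
  also have "\<dots> \<le> (Q + K) * S"
    using \<open>0 \<le> K\<close> \<open>0 \<le> S\<close> by (simp add: distrib_right)
  finally have "(absk k)^4 \<le> (Q + K) * S" .
  have "(absk k)\<^sup>2 \<le> K * W"
    using absk_sq_le_sum_chord_sq[OF assms(1,2,5), of k] zero_le_power2[of "absk k"]
    unfolding K_def W_def by linarith
  also have "\<dots> \<le> (Q + K) * W"
    using \<open>0 \<le> Q\<close> \<open>0 \<le> W\<close> by (simp add: distrib_right)
  finally have "(absk k)\<^sup>2 \<le> (Q + K) * W" .
  with \<open>(absk k)^4 \<le> (Q + K) * S\<close> assms(6,7) show ?thesis
    unfolding K_def[symmetric] Q_def[symmetric] S_def[symmetric] W_def[symmetric]
    by (simp add: distrib_left add_mono mult_right_mono flip: mult.assoc)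
qed

section \<open>Mean squares of differences of periodic fields\<close>

lemma mean_square_diff_eq_dft:
  fixes f :: "int \<Rightarrow> real"
  assumes "N > 0" and "has_period N f"
  shows "(\<Sum>n<N. (f (int n + h) - f (int n) - t * (f (int n + b) - f (int n)))\<^sup>2) / real N
    = (\<Sum>j<N. (cmod (diff_symbol h t b (real j / real N)))\<^sup>2
               * (cmod (dft N (\<lambda>n. of_real (f n)) (real j / real N)))\<^sup>2)"
proof -
  define F where "F = (\<lambda>n. complex_of_real (f n))"
  define D where "D = (\<lambda>n. (F (n + h) - F n) - of_real t * (F (n + b) - F n))"
  have "has_period N F"
    unfolding F_def by (rule has_period_comp[OF assms(2)])
  have "(\<Sum>n<N. (f (int n + h) - f (int n) - t * (f (int n + b) - f (int n)))\<^sup>2) / real N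
      = (\<Sum>n<N. (cmod (D (int n)))\<^sup>2) / real N"
    by (simp add: D_def F_def flip: of_real_diff of_real_mult)
  also have "\<dots> = (\<Sum>j<N. (cmod (dft N D (real j / real N)))\<^sup>2)"
    by (rule dft_parseval[OF assms(1), symmetric])
  also have "\<dots> = (\<Sum>j<N. (cmod (diff_symbol h t b (real j / real N)))\<^sup>2 * (cmod (dft N F (real j / real N)))\<^sup>2)"
    using assms(1) by (simp add: D_def dft_diff_symbol[OF \<open>has_period N F\<close>] norm_mult power_mult_distrib)
  finally show ?thesis
    by (simp add: F_def)
qed

definition spectrum :: "(int \<Rightarrow> real^2) \<Rightarrow> 2 \<Rightarrow> nat \<Rightarrow> real" where
  "spectrum u i j = (cmod (uhat u (real j / real (per u)) $ i))\<^sup>2"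

lemma spectrum_nonneg [simp]: "0 \<le> spectrum u i j"
  by (simp add: spectrum_def)

lemma mean_square_diff_eq_spectrum:
  assumes "u \<in> Uper"
  shows "(\<Sum>g<per u. \<Sum>h\<in>R. (u (int g + h) $ i - u (int g) $ i - t h * (u (int g + b) $ i - u (int g) $ i))\<^sup>2)
      / real (per u)
    = (\<Sum>j<per u. (\<Sum>h\<in>R. (cmod (diff_symbol h (t h) b (real j / real (per u))))\<^sup>2) * spectrum u i j)"
proof -
  define N where "N = per u"
  have N: "N > 0" "has_period N (\<lambda>n. u n $ i)"
    using Uper_has_period[OF assms] has_period_comp by (auto simp: N_def)
  have spectrum: "spectrum u i j = (cmod (dft N (\<lambda>n. of_real (u n $ i)) (real j / real N)))\<^sup>2"
    if "j < N" for j
    using that N(1) uhat_component[OF assms, of "real j / real N" i]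
    by (simp add: spectrum_def N_def Qk_def)
  have "(\<Sum>g<N. \<Sum>h\<in>R. (u (int g + h) $ i - u (int g) $ i - t h * (u (int g + b) $ i - u (int g) $ i))\<^sup>2) / real N
      = (\<Sum>h\<in>R. (\<Sum>g<N. (u (int g + h) $ i - u (int g) $ i - t h * (u (int g + b) $ i - u (int g) $ i))\<^sup>2) / real N)"
    by (subst sum.swap) (simp add: sum_divide_distrib)
  also have "\<dots> = (\<Sum>h\<in>R. \<Sum>j<N. (cmod (diff_symbol h (t h) b (real j / real N)))\<^sup>2 * spectrum u i j)"
    by (simp add: mean_square_diff_eq_dft[OF N] spectrum)
  also have "\<dots> = (\<Sum>j<N. (\<Sum>h\<in>R. (cmod (diff_symbol h (t h) b (real j / real N)))\<^sup>2) * spectrum u i j)"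
    by (subst sum.swap) (simp add: sum_distrib_right)
  finally show ?thesis
    by (simp add: N_def)
qed

lemma mean_square_first_diff_eq_spectrum:
  assumes "u \<in> Uper"
  shows "(\<Sum>g<per u. \<Sum>h\<in>R. (u (int g + h) $ i - u (int g) $ i)\<^sup>2) / real (per u)
    = (\<Sum>j<per u. (\<Sum>h\<in>R. (chord (of_int h * (real j / real (per u))))\<^sup>2) * spectrum u i j)"
  using mean_square_diff_eq_spectrum[OF assms, where R = R and i = i and t = "\<lambda>_. 0" and b = 0]
  by simp

lemma uhat_eq_0:
  assumes "u \<in> Uper" and "k \<in> Qk" and "real (per u) * k \<notin> \<int>"
  shows "uhat u k = 0"
  using uhat_component[OF assms(1,2)] assms(3) by (simp add: vec_eq_iff)

lemma norm_complex2_sq: "(norm (x :: complex^2))\<^sup>2 = (cmod (x $ 1))\<^sup>2 + (cmod (x $ 2))\<^sup>2"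
  by (simp add: norm_vec_def L2_set_def sum_2)

lemma infsum_Qk_eq_spectrum:
  assumes "u \<in> Uper"
  shows "infsum (\<lambda>k. (absk k)\<^sup>2 * (norm (uhat u k))\<^sup>2) Qk
      = (\<Sum>j<per u. (absk (real j / real (per u)))\<^sup>2 * (spectrum u 1 j + spectrum u 2 j))"
    and "infsum (\<lambda>k. (absk k)^4 * (cmod (uhat u k $ 1))\<^sup>2 + (absk k)\<^sup>2 * (cmod (uhat u k $ 2))\<^sup>2) Qk
      = (\<Sum>j<per u. (absk (real j / real (per u)))^4 * spectrum u 1 j
                    + (absk (real j / real (per u)))\<^sup>2 * spectrum u 2 j)"
  using Uper_has_period(1)[OF assms]
  by (simp_all add: infsum_Qk_eq_sum_grid uhat_eq_0[OF assms] spectrum_def norm_complex2_sq)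

section \<open>Distances to constants and to infinitesimal rigid motions\<close>

lemma rot_tpow [simp]: "rot (tpow h) = mat 1"
  by (simp add: rot_def tpow_def)

lemma act_tpow_x0: "act (tpow h) x0 - x0 = of_int h *\<^sub>R e2"
  by (simp add: act_def tpow_def x0_def)

lemma norm_real2_sq: "(norm (x :: real^2))\<^sup>2 = (x $ 1)\<^sup>2 + (x $ 2)\<^sup>2"
  by (simp add: norm_vec_def L2_set_def sum_2)

lemma mem_Uiso00_iff: "w \<in> Uiso00 R \<longleftrightarrow> (\<exists>a. \<forall>h\<in>R. w h = a)"
  by (simp add: Uiso00_def)

lemma mem_Uiso_iff: "w \<in> Uiso R \<longleftrightarrow> (\<exists>\<alpha> \<beta> \<gamma>. \<forall>h\<in>R. w h = vector [\<alpha> + \<beta> * of_int h, \<gamma>])"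
proof
  assume "w \<in> Uiso R"
  then obtain a S where S: "S \<in> Skew2" and w: "\<forall>h\<in>R. w h = a + S *v (of_int h *\<^sub>R e2)"
    by (auto simp: Uiso_def act_tpow_x0)
  have "transpose S $ 2 $ 2 = (- S) $ 2 $ 2"
    using S by (simp add: Skew2_def)
  then have "S $ 2 $ 2 = 0"
    by (simp add: transpose_def)
  with w have "\<forall>h\<in>R. w h $ 1 = a $ 1 + S $ 1 $ 2 * of_int h \<and> w h $ 2 = a $ 2"
    by (simp add: matrix_vector_mult_def sum_2 e2_def)
  then have "\<forall>h\<in>R. w h = vector [a $ 1 + S $ 1 $ 2 * of_int h, a $ 2]"
    by (simp add: vec_eq_iff forall_2)
  then show "\<exists>\<alpha> \<beta> \<gamma>. \<forall>h\<in>R. w h = vector [\<alpha> + \<beta> * of_int h, \<gamma>]"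
    by blast
next
  assume "\<exists>\<alpha> \<beta> \<gamma>. \<forall>h\<in>R. w h = vector [\<alpha> + \<beta> * of_int h, \<gamma>]"
  then obtain \<alpha> \<beta> \<gamma> where w: "\<forall>h\<in>R. w h = vector [\<alpha> + \<beta> * of_int h, \<gamma>]"
    by blast
  define S :: "real^2^2" where "S = (\<chi> i j. if i = 1 \<and> j = 2 then \<beta> else if i = 2 \<and> j = 1 then - \<beta> else 0)"
  have "S \<in> Skew2"
    unfolding Skew2_def S_def by (simp add: vec_eq_iff forall_2 transpose_def)
  moreover have "\<forall>h\<in>R. mat 1 *v w h = vector [\<alpha>, \<gamma>] + S *v (of_int h *\<^sub>R e2)"
    using w by (simp add: S_def vec_eq_iff forall_2 matrix_vector_mult_def sum_2 e2_def mat_def)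
  ultimately show "w \<in> Uiso R"
    by (auto simp: Uiso_def act_tpow_x0)
qed

lemma distR_nonneg: "U \<noteq> {} \<Longrightarrow> 0 \<le> distR R v U"
  unfolding distR_def by (rule cInf_greatest) (auto simp: sum_nonneg)

lemma distR_sq_le:
  assumes "w \<in> U"
  shows "(distR R v U)\<^sup>2 \<le> (\<Sum>h\<in>R. (norm (v h - w h))\<^sup>2)"
proof -
  have "distR R v U \<le> sqrt (\<Sum>h\<in>R. (norm (v h - w h))\<^sup>2)"
    unfolding distR_def using assms
    by (intro cInf_lower bdd_belowI[where m = 0]) (auto simp: sum_nonneg)
  then have "(distR R v U)\<^sup>2 \<le> (sqrt (\<Sum>h\<in>R. (norm (v h - w h))\<^sup>2))\<^sup>2"
    using distR_nonneg[of U] assms by (intro power_mono) (auto simp: sum_nonneg)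
  then show ?thesis
    by (simp add: sum_nonneg)
qed

lemma le_distR_sq:
  assumes "U \<noteq> {}" and "C > 0" and "\<And>w. w \<in> U \<Longrightarrow> B \<le> C * (\<Sum>h\<in>R. (norm (v h - w h))\<^sup>2)"
  shows "B \<le> C * (distR R v U)\<^sup>2"
proof (cases "B \<le> 0")
  case True
  have "0 \<le> C * (distR R v U)\<^sup>2"
    using assms(2) by simp
  with True show ?thesis
    by linarith
next
  case False
  have "sqrt (B / C) \<le> distR R v U"
    unfolding distR_def
  proof (rule cInf_greatest)
    fix d assume "d \<in> (\<lambda>w. sqrt (\<Sum>h\<in>R. (norm (v h - w h))\<^sup>2)) ` U"
    then obtain w where "w \<in> U" and d: "d = sqrt (\<Sum>h\<in>R. (norm (v h - w h))\<^sup>2)"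
      by blast
    with assms(2,3) show "sqrt (B / C) \<le> d"
      by (simp add: field_simps)
  qed (use assms(1) in blast)
  then have "(sqrt (B / C))\<^sup>2 \<le> (distR R v U)\<^sup>2"
    by (rule power_mono) (use False assms(2) in simp)
  then have "B / C \<le> (distR R v U)\<^sup>2"
    using False assms(2) by simp
  with assms(2) show ?thesis
    by (simp add: field_simps)
qed

lemma seminormU_sq:
  "(seminormU R U u)\<^sup>2 = (\<Sum>g<per u. (distR R (\<lambda>h. u (int g + h)) U)\<^sup>2) / real (per u)"
  by (simp add: seminormU_def Let_def sum_nonneg)

lemma seminormU_nonneg: "0 \<le> seminormU R U u"
  by (simp add: seminormU_def Let_def sum_nonneg)

lemma gradnorm_sq:
  "(gradnorm R u)\<^sup>2 = (\<Sum>g<per u. \<Sum>h\<in>R. (norm (u (int g + h) - u (int g)))\<^sup>2) / real (per u)"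
  by (simp add: gradnorm_def Let_def sum_nonneg)

lemma gradnorm_nonneg: "0 \<le> gradnorm R u"
  by (simp add: gradnorm_def Let_def sum_nonneg)

lemma distR_Uiso00_sq_le: "(distR R v (Uiso00 R))\<^sup>2 \<le> (\<Sum>h\<in>R. (norm (v h - v 0))\<^sup>2)"
  by (rule distR_sq_le[of "\<lambda>_. v 0"]) (auto simp: mem_Uiso00_iff)

lemma sum_norm_diff_sq_le_distR_Uiso00:
  assumes "finite R" and "0 \<in> R"
  shows "(\<Sum>h\<in>R. (norm (v h - v 0))\<^sup>2) \<le> (2 + 2 * real (card R)) * (distR R v (Uiso00 R))\<^sup>2"
proof (rule le_distR_sq)
  show "Uiso00 R \<noteq> {}"
    using mem_Uiso00_iff[of "\<lambda>_. 0" R] by blast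
  fix w assume "w \<in> Uiso00 R"
  then obtain a where a: "\<forall>h\<in>R. w h = a"
    by (auto simp: mem_Uiso00_iff)
  define T where "T = (\<Sum>h\<in>R. (norm (v h - a))\<^sup>2)"
  have "(norm (v 0 - a))\<^sup>2 \<le> T"
    unfolding T_def using assms by (intro member_le_sum) simp_all
  have "(\<Sum>h\<in>R. (norm (v h - v 0))\<^sup>2) \<le> (\<Sum>h\<in>R. 2 * (norm (v h - a))\<^sup>2 + 2 * (norm (v 0 - a))\<^sup>2)"
    by (intro sum_mono norm_diff_sq_le)
  also have "\<dots> = 2 * T + 2 * real (card R) * (norm (v 0 - a))\<^sup>2"
    by (simp add: T_def sum.distrib sum_distrib_left)
  also have "\<dots> \<le> (2 + 2 * real (card R)) * T"
    using mult_left_mono[OF \<open>(norm (v 0 - a))\<^sup>2 \<le> T\<close>, of "2 * real (card R)"]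
    by (simp add: algebra_simps)
  finally show "(\<Sum>h\<in>R. (norm (v h - v 0))\<^sup>2) \<le> (2 + 2 * real (card R)) * (\<Sum>h\<in>R. (norm (v h - w h))\<^sup>2)"
    using a by (simp add: T_def)
qed simp

lemma distR_Uiso_sq_le:
  "(distR R v (Uiso R))\<^sup>2
    \<le> (\<Sum>h\<in>R. (v h $ 1 - v 0 $ 1 - of_int h * (v 1 $ 1 - v 0 $ 1))\<^sup>2 + (v h $ 2 - v 0 $ 2)\<^sup>2)"
proof -
  define w where "w h = (vector [v 0 $ 1 + (v 1 $ 1 - v 0 $ 1) * of_int h, v 0 $ 2] :: real^2)" for h
  have "w \<in> Uiso R"
    unfolding mem_Uiso_iff w_def by blast
  then have "(distR R v (Uiso R))\<^sup>2 \<le> (\<Sum>h\<in>R. (norm (v h - w h))\<^sup>2)"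
    by (rule distR_sq_le)
  also have "\<dots> = (\<Sum>h\<in>R. (v h $ 1 - v 0 $ 1 - of_int h * (v 1 $ 1 - v 0 $ 1))\<^sup>2 + (v h $ 2 - v 0 $ 2)\<^sup>2)"
    by (simp add: norm_real2_sq w_def algebra_simps)
  finally show ?thesis .
qed

(* Both differences vanish on infinitesimal rigid motions, so only the residual v - w contributes. *)

lemma diff_sq_le_rigid_residual:
  fixes v w :: "int \<Rightarrow> real^2"
  assumes "\<forall>h\<in>R. w h = vector [\<alpha> + \<beta> * of_int h, \<gamma>]"
    and "finite R" and "h \<in> R" and "0 \<in> R" and "b \<in> R" and "b \<noteq> 0"
  shows "(v h $ 1 - v 0 $ 1 - of_int h / of_int b * (v b $ 1 - v 0 $ 1))\<^sup>2 + (v h $ 2 - v 0 $ 2)\<^sup>2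
    \<le> (3 * (1 + (1 - of_int h / of_int b)\<^sup>2 + (of_int h / of_int b)\<^sup>2) + 4) * (\<Sum>h\<in>R. (norm (v h - w h))\<^sup>2)"
proof -
  define r where "r h = v h - w h" for h
  define T where "T = (\<Sum>h\<in>R. (norm (r h))\<^sup>2)"
  define t :: real where "t = of_int h / of_int b"
  have r_le: "(r h' $ i)\<^sup>2 \<le> T" if "h' \<in> R" for h' i
  proof -
    have "(r h' $ i)\<^sup>2 \<le> (norm (r h'))\<^sup>2"
      using power_mono[OF component_le_norm_cart[of "r h'" i], of 2] by simp
    also have "\<dots> \<le> T"
      unfolding T_def using assms(2) that by (intro member_le_sum) simp_all
    finally show ?thesis .
  qed
  have "v h $ 1 - v 0 $ 1 - t * (v b $ 1 - v 0 $ 1) = r h $ 1 + (- (1 - t) * r 0 $ 1) + (- t * r b $ 1)"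
    using assms by (simp add: r_def t_def field_simps)
  then have "(v h $ 1 - v 0 $ 1 - t * (v b $ 1 - v 0 $ 1))\<^sup>2
      \<le> 3 * ((r h $ 1)\<^sup>2 + (1 - t)\<^sup>2 * (r 0 $ 1)\<^sup>2 + t\<^sup>2 * (r b $ 1)\<^sup>2)"
    using power2_add3_le[of "r h $ 1" "- (1 - t) * r 0 $ 1" "- t * r b $ 1"]
    by (simp add: power_mult_distrib power2_commute)
  also have "\<dots> \<le> 3 * (T + (1 - t)\<^sup>2 * T + t\<^sup>2 * T)"
    using r_le[OF assms(3)] r_le[OF assms(4)] r_le[OF assms(5)]
    by (intro mult_left_mono add_mono) (simp_all add: mult_left_mono)
  finally have first: "(v h $ 1 - v 0 $ 1 - t * (v b $ 1 - v 0 $ 1))\<^sup>2 \<le> 3 * (1 + (1 - t)\<^sup>2 + t\<^sup>2) * T"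
    by (simp add: algebra_simps)
  have "v h $ 2 - v 0 $ 2 = r h $ 2 + (- r 0 $ 2)"
    using assms by (simp add: r_def)
  then have "(v h $ 2 - v 0 $ 2)\<^sup>2 \<le> 2 * (r h $ 2)\<^sup>2 + 2 * (r 0 $ 2)\<^sup>2"
    using power2_add_le[of "r h $ 2" "- r 0 $ 2"] by simp
  also have "\<dots> \<le> 4 * T"
    using r_le[OF assms(3), of 2] r_le[OF assms(4), of 2] by simp
  finally show ?thesis
    using first by (simp add: T_def r_def t_def algebra_simps)
qed

lemma sum_sq_le_distR_Uiso:
  assumes "finite R" and "0 \<in> R" and "b \<in> R" and "b \<noteq> 0"
  shows "(\<Sum>h\<in>R. (v h $ 1 - v 0 $ 1 - of_int h / of_int b * (v b $ 1 - v 0 $ 1))\<^sup>2 + (v h $ 2 - v 0 $ 2)\<^sup>2)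
    \<le> (\<Sum>h\<in>R. 3 * (1 + (1 - of_int h / of_int b)\<^sup>2 + (of_int h / of_int b)\<^sup>2) + 4) * (distR R v (Uiso R))\<^sup>2"
proof (rule le_distR_sq)
  show "Uiso R \<noteq> {}"
    using mem_Uiso_iff[of "\<lambda>h. vector [0 + 0 * of_int h, 0]" R] by blast
  show "0 < (\<Sum>h\<in>R. 3 * (1 + (1 - of_int h / of_int b)\<^sup>2 + (of_int h / of_int b)\<^sup>2) + 4 :: real)"
    using assms(1,2) by (intro sum_pos2[of _ 0]) (auto intro: add_pos_nonneg)
  fix w assume "w \<in> Uiso R"
  then obtain \<alpha> \<beta> \<gamma> where w: "\<forall>h\<in>R. w h = vector [\<alpha> + \<beta> * of_int h, \<gamma>]"
    by (auto simp: mem_Uiso_iff)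
  show "(\<Sum>h\<in>R. (v h $ 1 - v 0 $ 1 - of_int h / of_int b * (v b $ 1 - v 0 $ 1))\<^sup>2 + (v h $ 2 - v 0 $ 2)\<^sup>2)
      \<le> (\<Sum>h\<in>R. 3 * (1 + (1 - of_int h / of_int b)\<^sup>2 + (of_int h / of_int b)\<^sup>2) + 4)
        * (\<Sum>h\<in>R. (norm (v h - w h))\<^sup>2)"
    unfolding sum_distrib_right
    using diff_sq_le_rigid_residual[OF w assms(1) _ assms(2-4)] by (rule sum_mono)
qed

lemma gradnorm_sq_eq_spectrum:
  assumes "u \<in> Uper"
  shows "(gradnorm R u)\<^sup>2 = (\<Sum>j<per u. (\<Sum>h\<in>R. (chord (of_int h * (real j / real (per u))))\<^sup>2)
                                  * (spectrum u 1 j + spectrum u 2 j))"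
  unfolding gradnorm_sq norm_real2_sq vector_minus_component sum.distrib add_divide_distrib
    mean_square_first_diff_eq_spectrum[OF assms]
  by (simp add: distrib_left sum.distrib)

lemma normR_sq_le_spectrum:
  assumes "u \<in> Uper"
  shows "(normR R u)\<^sup>2 \<le> (\<Sum>j<per u.
      (\<Sum>h\<in>R. (cmod (diff_symbol h (of_int h) 1 (real j / real (per u))))\<^sup>2) * spectrum u 1 j
    + (\<Sum>h\<in>R. (chord (of_int h * (real j / real (per u))))\<^sup>2) * spectrum u 2 j)"
proof -
  define N where "N = per u"
  have "(normR R u)\<^sup>2 = (\<Sum>g<N. (distR R (\<lambda>h. u (int g + h)) (Uiso R))\<^sup>2) / real N"
    by (simp add: normR_def seminormU_sq N_def)
  also have "\<dots> \<le> (\<Sum>g<N. \<Sum>h\<in>R. (u (int g + h) $ 1 - u (int g) $ 1 - of_int h * (u (int g + 1) $ 1 - u (int g) $ 1))\<^sup>2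
                               + (u (int g + h) $ 2 - u (int g) $ 2)\<^sup>2) / real N"
  proof (intro divide_right_mono sum_mono)
    fix g
    show "(distR R (\<lambda>h. u (int g + h)) (Uiso R))\<^sup>2 \<le> (\<Sum>h\<in>R. (u (int g + h) $ 1 - u (int g) $ 1
        - of_int h * (u (int g + 1) $ 1 - u (int g) $ 1))\<^sup>2 + (u (int g + h) $ 2 - u (int g) $ 2)\<^sup>2)"
      using distR_Uiso_sq_le[of R "\<lambda>h. u (int g + h)"] by simp
  qed simp
  also have "\<dots> = (\<Sum>j<N. (\<Sum>h\<in>R. (cmod (diff_symbol h (of_int h) 1 (real j / real N)))\<^sup>2) * spectrum u 1 j
      + (\<Sum>h\<in>R. (chord (of_int h * (real j / real N)))\<^sup>2) * spectrum u 2 j)"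
    unfolding N_def sum.distrib add_divide_distrib mean_square_diff_eq_spectrum[OF assms]
      mean_square_first_diff_eq_spectrum[OF assms] ..
  finally show ?thesis
    by (simp add: N_def)
qed

lemma spectrum_le_normR_sq:
  assumes "u \<in> Uper" and "finite R" and "0 \<in> R" and "b \<in> R" and "b \<noteq> 0"
  shows "(\<Sum>j<per u.
      (\<Sum>h\<in>R. (cmod (diff_symbol h (of_int h / of_int b) b (real j / real (per u))))\<^sup>2) * spectrum u 1 j
    + (\<Sum>h\<in>R. (chord (of_int h * (real j / real (per u))))\<^sup>2) * spectrum u 2 j)
    \<le> (\<Sum>h\<in>R. 3 * (1 + (1 - of_int h / of_int b)\<^sup>2 + (of_int h / of_int b)\<^sup>2) + 4) * (normR R u)\<^sup>2"
proof -
  define N where "N = per u"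
  define C where "C = (\<Sum>h\<in>R. 3 * (1 + (1 - of_int h / of_int b)\<^sup>2 + (of_int h / of_int b :: real)\<^sup>2) + 4)"
  have "(\<Sum>j<N. (\<Sum>h\<in>R. (cmod (diff_symbol h (of_int h / of_int b) b (real j / real N)))\<^sup>2) * spectrum u 1 j
      + (\<Sum>h\<in>R. (chord (of_int h * (real j / real N)))\<^sup>2) * spectrum u 2 j)
    = (\<Sum>g<N. \<Sum>h\<in>R. (u (int g + h) $ 1 - u (int g) $ 1 - of_int h / of_int b * (u (int g + b) $ 1 - u (int g) $ 1))\<^sup>2
                      + (u (int g + h) $ 2 - u (int g) $ 2)\<^sup>2) / real N"
    unfolding N_def sum.distrib add_divide_distrib mean_square_diff_eq_spectrum[OF assms(1)]
      mean_square_first_diff_eq_spectrum[OF assms(1)] ..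
  also have "\<dots> \<le> C * ((\<Sum>g<N. (distR R (\<lambda>h. u (int g + h)) (Uiso R))\<^sup>2) / real N)"
    unfolding times_divide_eq_right
  proof (intro divide_right_mono sum_le_mult_sum)
    fix g
    show "(\<Sum>h\<in>R. (u (int g + h) $ 1 - u (int g) $ 1 - of_int h / of_int b * (u (int g + b) $ 1 - u (int g) $ 1))\<^sup>2
        + (u (int g + h) $ 2 - u (int g) $ 2)\<^sup>2) \<le> C * (distR R (\<lambda>h. u (int g + h)) (Uiso R))\<^sup>2"
      using sum_sq_le_distR_Uiso[OF assms(2-5), of "\<lambda>h. u (int g + h)"] by (simp add: C_def)
  qed simp
  also have "\<dots> = C * (normR R u)\<^sup>2"
    by (simp add: normR_def seminormU_sq N_def)
  finally show ?thesis
    by (simp add: N_def C_def)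
qed

section \<open>Equivalence of the seminorms\<close>

definition equivalent_on :: "'a set \<Rightarrow> ('a \<Rightarrow> real) \<Rightarrow> ('a \<Rightarrow> real) \<Rightarrow> bool" where
  "equivalent_on X f g \<longleftrightarrow>
    (\<exists>C>0. \<forall>x\<in>X. 0 \<le> f x \<and> 0 \<le> g x \<and> f x \<le> C * g x \<and> g x \<le> C * f x)"

lemma equivalent_onI:
  assumes "\<And>x. x \<in> X \<Longrightarrow> 0 \<le> f x" and "\<And>x. x \<in> X \<Longrightarrow> 0 \<le> g x"
    and "\<And>x. x \<in> X \<Longrightarrow> f x \<le> A * g x" and "\<And>x. x \<in> X \<Longrightarrow> g x \<le> B * f x"
  shows "equivalent_on X f g"
proof -
  define C where "C = max 1 (max A B)"
  have "f x \<le> C * g x" "g x \<le> C * f x" if "x \<in> X" for x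
  proof -
    have "A * g x \<le> C * g x" "B * f x \<le> C * f x"
      using assms(1,2)[OF that] by (simp_all add: C_def mult_right_mono)
    with assms(3,4)[OF that] show "f x \<le> C * g x" "g x \<le> C * f x"
      by simp_all
  qed
  moreover have "C > 0"
    by (simp add: C_def)
  ultimately show ?thesis
    using assms(1,2) by (auto simp: equivalent_on_def)
qed

lemma equivalent_on_sqrt:
  assumes "equivalent_on X (\<lambda>x. (f x)\<^sup>2) (\<lambda>x. (g x)\<^sup>2)"
    and "\<And>x. x \<in> X \<Longrightarrow> 0 \<le> f x" and "\<And>x. x \<in> X \<Longrightarrow> 0 \<le> g x"
  shows "equivalent_on X f g"
proof -
  obtain C where C: "C > 0" "\<And>x. x \<in> X \<Longrightarrow> (f x)\<^sup>2 \<le> C * (g x)\<^sup>2 \<and> (g x)\<^sup>2 \<le> C * (f x)\<^sup>2"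
    using assms(1) by (auto simp: equivalent_on_def)
  have root: "a \<le> sqrt C * b" if "a\<^sup>2 \<le> C * b\<^sup>2" "0 \<le> a" "0 \<le> b" for a b
    using real_sqrt_le_mono[OF that(1)] that(2,3) C(1) by (simp add: real_sqrt_mult)
  show ?thesis
    by (rule equivalent_onI[of X f g "sqrt C" "sqrt C"]) (use assms(2,3) C root in auto)
qed

lemma equivalent_on_bounds:
  assumes "equivalent_on X f g"
  shows "\<exists>C0>0. \<forall>C\<ge>C0. \<forall>x\<in>X. 1 / C * f x \<le> g x \<and> g x \<le> C * f x"
proof -
  obtain C0 where C0: "C0 > 0"
    "\<And>x. x \<in> X \<Longrightarrow> 0 \<le> f x \<and> 0 \<le> g x \<and> f x \<le> C0 * g x \<and> g x \<le> C0 * f x"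
    using assms by (auto simp: equivalent_on_def)
  have "1 / C * f x \<le> g x \<and> g x \<le> C * f x" if "C0 \<le> C" "x \<in> X" for C x
  proof
    have "C0 * g x \<le> C * g x" "C0 * f x \<le> C * f x"
      using C0(2)[OF that(2)] that(1) by (simp_all add: mult_right_mono)
    with C0(2)[OF that(2)] have "f x \<le> C * g x" "g x \<le> C * f x"
      by simp_all
    then show "1 / C * f x \<le> g x" "g x \<le> C * f x"
      using C0(1) that(1) by (simp_all add: field_simps)
  qed
  with C0(1) show ?thesis
    by blast
qed

lemma equivalent_on_common_constants:
  assumes "equivalent_on X f1 g1" and "equivalent_on X f2 g2" and "equivalent_on X f3 g3"
  shows "\<exists>c C. c > 0 \<and> C > 0 \<and>
    (\<forall>x\<in>X. c * f1 x \<le> g1 x \<and> g1 x \<le> C * f1 x) \<and>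
    (\<forall>x\<in>X. c * f2 x \<le> g2 x \<and> g2 x \<le> C * f2 x) \<and>
    (\<forall>x\<in>X. c * f3 x \<le> g3 x \<and> g3 x \<le> C * f3 x)"
proof -
  obtain C1 where "C1 > 0" and C1: "\<forall>C\<ge>C1. \<forall>x\<in>X. 1 / C * f1 x \<le> g1 x \<and> g1 x \<le> C * f1 x"
    using equivalent_on_bounds[OF assms(1)] by blast
  obtain C2 where C2: "\<forall>C\<ge>C2. \<forall>x\<in>X. 1 / C * f2 x \<le> g2 x \<and> g2 x \<le> C * f2 x"
    using equivalent_on_bounds[OF assms(2)] by blast
  obtain C3 where C3: "\<forall>C\<ge>C3. \<forall>x\<in>X. 1 / C * f3 x \<le> g3 x \<and> g3 x \<le> C * f3 x"
    using equivalent_on_bounds[OF assms(3)] by blast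
  define C where "C = max C1 (max C2 C3)"
  have "C > 0"
    using \<open>C1 > 0\<close> by (simp add: C_def)
  moreover have "C1 \<le> C" "C2 \<le> C" "C3 \<le> C"
    by (simp_all add: C_def)
  ultimately show ?thesis
    using C1 C2 C3 by (intro exI[of _ "1 / C"] exI[of _ C]) simp
qed

lemma equivalent_on_gradnorm_normR00:
  assumes "finite R" and "0 \<in> R"
  shows "equivalent_on Uper (gradnorm R) (normR00 R)"
proof (rule equivalent_on_sqrt)
  show "equivalent_on Uper (\<lambda>u. (gradnorm R u)\<^sup>2) (\<lambda>u. (normR00 R u)\<^sup>2)"
  proof (rule equivalent_onI)
    fix u
    have "(\<Sum>h\<in>R. (norm (u (int g + h) - u (int g)))\<^sup>2)
        \<le> (2 + 2 * real (card R)) * (distR R (\<lambda>h. u (int g + h)) (Uiso00 R))\<^sup>2" for g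
      using sum_norm_diff_sq_le_distR_Uiso00[OF assms, of "\<lambda>h. u (int g + h)"] by simp
    then show "(gradnorm R u)\<^sup>2 \<le> (2 + 2 * real (card R)) * (normR00 R u)\<^sup>2"
      unfolding gradnorm_sq normR00_def seminormU_sq times_divide_eq_right
      by (intro divide_right_mono sum_le_mult_sum) simp_all
    have "(distR R (\<lambda>h. u (int g + h)) (Uiso00 R))\<^sup>2 \<le> (\<Sum>h\<in>R. (norm (u (int g + h) - u (int g)))\<^sup>2)" for g
      using distR_Uiso00_sq_le[of R "\<lambda>h. u (int g + h)"] by simp
    then show "(normR00 R u)\<^sup>2 \<le> 1 * (gradnorm R u)\<^sup>2"
      unfolding gradnorm_sq normR00_def seminormU_sq
      by (simp add: divide_right_mono sum_mono)
  qed simp_all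
qed (simp_all add: gradnorm_nonneg normR00_def seminormU_nonneg)

lemma equivalent_on_gradnorm_sq_infsum:
  assumes "finite R" and "A \<subseteq> R" and "(\<Sum>h\<in>A. c h * h) = 1"
  shows "equivalent_on Uper (\<lambda>u. (gradnorm R u)\<^sup>2)
    (\<lambda>u. infsum (\<lambda>k. (absk k)\<^sup>2 * (norm (uhat u k))\<^sup>2) Qk)"
proof (rule equivalent_onI)
  fix u assume u: "u \<in> Uper"
  define W where "W k = (\<Sum>h\<in>R. (chord (of_int h * k))\<^sup>2)" for k
  define s where "s j = spectrum u 1 j + spectrum u 2 j" for j
  define k where "k j = real j / real (per u)" for j
  have grad: "(gradnorm R u)\<^sup>2 = (\<Sum>j<per u. W (k j) * s j)"
    unfolding gradnorm_sq_eq_spectrum[OF u] W_def s_def k_def ..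
  have infsum: "infsum (\<lambda>k. (absk k)\<^sup>2 * (norm (uhat u k))\<^sup>2) Qk = (\<Sum>j<per u. (absk (k j))\<^sup>2 * s j)"
    unfolding infsum_Qk_eq_spectrum(1)[OF u] s_def k_def ..
  have "0 \<le> s j" for j
    by (simp add: s_def)
  have "W (k j) * s j \<le> (4 * pi\<^sup>2 * (\<Sum>h\<in>R. (of_int h)\<^sup>2)) * ((absk (k j))\<^sup>2 * s j)" for j
    using mult_right_mono[OF sum_chord_sq_le[of "k j" R] \<open>0 \<le> s j\<close>] by (simp add: W_def mult.assoc)
  then show "(gradnorm R u)\<^sup>2
      \<le> (4 * pi\<^sup>2 * (\<Sum>h\<in>R. (of_int h)\<^sup>2)) * infsum (\<lambda>k. (absk k)\<^sup>2 * (norm (uhat u k))\<^sup>2) Qk"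
    unfolding grad infsum by (rule sum_le_mult_sum)
  have "(absk (k j))\<^sup>2 * s j \<le> ((\<Sum>h\<in>A. (of_int (c h))\<^sup>2) / 4) * (W (k j) * s j)" for j
    using mult_right_mono[OF absk_sq_le_sum_chord_sq[OF assms, of "k j"] \<open>0 \<le> s j\<close>]
    by (simp add: W_def)
  then show "infsum (\<lambda>k. (absk k)\<^sup>2 * (norm (uhat u k))\<^sup>2) Qk
      \<le> ((\<Sum>h\<in>A. (of_int (c h))\<^sup>2) / 4) * (gradnorm R u)\<^sup>2"
    unfolding grad infsum by (rule sum_le_mult_sum)
  show "0 \<le> infsum (\<lambda>k. (absk k)\<^sup>2 * (norm (uhat u k))\<^sup>2) Qk"
    unfolding infsum using \<open>\<And>j. 0 \<le> s j\<close> by (simp add: sum_nonneg)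
qed simp

lemma equivalent_on_normR_sq_infsum:
  assumes "finite R" and "0 \<in> R" and "A \<subseteq> R" and "\<forall>h\<in>A. h + b \<in> R" and "b \<in> R" and "b \<noteq> 0"
    and "(\<Sum>h\<in>A. c h * h) = 1"
  shows "equivalent_on Uper (\<lambda>u. (normR R u)\<^sup>2)
    (\<lambda>u. infsum (\<lambda>k. (absk k)^4 * (cmod (uhat u k $ 1))\<^sup>2 + (absk k)\<^sup>2 * (cmod (uhat u k $ 2))\<^sup>2) Qk)"
proof (rule equivalent_onI)
  fix u assume u: "u \<in> Uper"
  define k where "k j = real j / real (per u)" for j
  define I where "I = (\<Sum>j<per u. (absk (k j))^4 * spectrum u 1 j + (absk (k j))\<^sup>2 * spectrum u 2 j)"
  have I: "infsum (\<lambda>k. (absk k)^4 * (cmod (uhat u k $ 1))\<^sup>2 + (absk k)\<^sup>2 * (cmod (uhat u k $ 2))\<^sup>2) Qk = I"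
    unfolding infsum_Qk_eq_spectrum(2)[OF u] I_def k_def ..
  show "(normR R u)\<^sup>2 \<le> (16 * pi ^ 4 * (\<Sum>h\<in>R. (of_int h) ^ 4) + 4 * pi\<^sup>2 * (\<Sum>h\<in>R. (of_int h)\<^sup>2))
      * infsum (\<lambda>k. (absk k)^4 * (cmod (uhat u k $ 1))\<^sup>2 + (absk k)\<^sup>2 * (cmod (uhat u k $ 2))\<^sup>2) Qk"
    unfolding I I_def k_def
    by (rule order_trans[OF normR_sq_le_spectrum[OF u]], intro sum_le_mult_sum weighted_symbols_le_absk) simp_all
  define M where "M = (\<Sum>h\<in>A. (of_int (c h) :: real)\<^sup>2)\<^sup>2 * (real (card A) + (\<Sum>h\<in>A. (of_int h / of_int b)\<^sup>2))
    + (\<Sum>h\<in>A. (of_int (c h))\<^sup>2)"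
  have "0 \<le> M"
    by (simp add: M_def sum_nonneg)
  have "I \<le> M * (\<Sum>j<per u. (\<Sum>h\<in>R. (cmod (diff_symbol h (of_int h / of_int b) b (k j)))\<^sup>2) * spectrum u 1 j
      + (\<Sum>h\<in>R. (chord (of_int h * k j))\<^sup>2) * spectrum u 2 j)"
    unfolding I_def M_def by (intro sum_le_mult_sum absk_le_weighted_symbols[OF assms(1,3,4,6,7)]) simp_all
  also have "\<dots> \<le> M * ((\<Sum>h\<in>R. 3 * (1 + (1 - of_int h / of_int b)\<^sup>2 + (of_int h / of_int b)\<^sup>2) + 4) * (normR R u)\<^sup>2)"
    using spectrum_le_normR_sq[OF u assms(1,2,5,6)] \<open>0 \<le> M\<close>
    unfolding k_def by (rule mult_left_mono)
  finally show "infsum (\<lambda>k. (absk k)^4 * (cmod (uhat u k $ 1))\<^sup>2 + (absk k)\<^sup>2 * (cmod (uhat u k $ 2))\<^sup>2) Qk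
      \<le> (M * (\<Sum>h\<in>R. 3 * (1 + (1 - of_int h / of_int b)\<^sup>2 + (of_int h / of_int b)\<^sup>2) + 4)) * (normR R u)\<^sup>2"
    unfolding I by (simp add: mult.assoc)
  show "0 \<le> infsum (\<lambda>k. (absk k)^4 * (cmod (uhat u k $ 1))\<^sup>2 + (absk k)\<^sup>2 * (cmod (uhat u k $ 2))\<^sup>2) Qk"
    unfolding I I_def by (simp add: sum_nonneg)
qed (simp add: normR_def seminormU_nonneg)

lemma generates_imp_bezout:
  assumes "finite A" and "generates A"
  obtains c where "(\<Sum>h\<in>A. c h * h) = (1::int)"
proof -
  define S where "S = {x. \<exists>c. x = (\<Sum>h\<in>A. c h * h)}"
  have "0 \<in> S"
    unfolding S_def by (auto intro: exI[of _ "\<lambda>_. 0"])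
  moreover have "A \<subseteq> S"
  proof
    fix h assume "h \<in> A"
    have "(\<Sum>h'\<in>A. (if h' = h then 1 else 0) * h') = (\<Sum>h'\<in>A. if h' = h then h' else 0)"
      by (rule sum.cong) simp_all
    also have "\<dots> = h"
      using \<open>h \<in> A\<close> assms(1) by simp
    finally have "h = (\<Sum>h'\<in>A. (if h' = h then 1 else 0) * h')"
      by (rule sym)
    then have "\<exists>c. h = (\<Sum>h'\<in>A. c h' * h')"
      by (rule exI[of _ "\<lambda>h'. if h' = h then 1 else 0"])
    then show "h \<in> S"
      unfolding S_def by blast
  qed
  moreover have "x + y \<in> S \<and> - x \<in> S" if "x \<in> S" "y \<in> S" for x y
  proof -
    obtain c where x: "x = (\<Sum>h\<in>A. c h * h)"
      using \<open>x \<in> S\<close> by (auto simp: S_def)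
    obtain d where y: "y = (\<Sum>h\<in>A. d h * h)"
      using \<open>y \<in> S\<close> by (auto simp: S_def)
    have "x + y = (\<Sum>h\<in>A. (c h + d h) * h)" "- x = (\<Sum>h\<in>A. (- c h) * h)"
      using x y by (simp_all add: sum.distrib distrib_right sum_negf)
    then show ?thesis
      unfolding S_def mem_Collect_eq
      by (intro conjI exI[of _ "\<lambda>h. c h + d h"] exI[of _ "\<lambda>h. - c h"])
  qed
  ultimately have "S = UNIV"
    using assms(2)[unfolded generates_def, rule_format, of S] by blast
  then have "(1::int) \<in> S"
    by simp
  then obtain c where "1 = (\<Sum>h\<in>A. c h * h)"
    by (auto simp: S_def)
  then show ?thesis
    using that[of c] by simp
qed

lemma affine_hull_orbit_nonzero:
  assumes "affine hull ((\<lambda>n. act (tpow n) x0) ` B) = affine hull (range (\<lambda>n. act (tpow n) x0))"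
  obtains b where "b \<in> B" and "b \<noteq> 0"
proof (rule ccontr)
  assume "\<not> thesis"
  with that have "B \<subseteq> {0}"
    by blast
  then have "(\<lambda>n. act (tpow n) x0) ` B \<subseteq> {0}"
    by (auto simp: act_def tpow_def x0_def)
  then have "affine hull ((\<lambda>n. act (tpow n) x0) ` B) \<subseteq> affine hull {0}"
    by (rule hull_mono)
  then have "affine hull ((\<lambda>n. act (tpow n) x0) ` B) \<subseteq> {0}"
    by simp
  moreover have "act (tpow 1) x0 \<in> affine hull ((\<lambda>n. act (tpow n) x0) ` B)"
    unfolding assms by (rule hull_inc) simp
  moreover have "act (tpow 1) x0 \<noteq> 0"
    by (simp add: act_def tpow_def x0_def e2_def vec_eq_iff forall_2)
  ultimately show False
    by blast
qed

lemma Property2_imp_bezout_shift: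
  assumes "Property2 R"
  obtains A b c where "finite R" and "0 \<in> R" and "A \<subseteq> R" and "\<forall>h\<in>A. h + b \<in> R"
    and "b \<in> R" and "b \<noteq> 0" and "(\<Sum>h\<in>A. c h * h) = 1"
proof -
  obtain A B where "finite R" and A: "0 \<in> A" "generates A" and "0 \<in> B"
    and aff: "affine hull ((\<lambda>n. act (tpow n) x0) ` B) = affine hull (range (\<lambda>n. act (tpow n) x0))"
    and sub: "{g + h | g h. g \<in> A \<and> h \<in> B} \<subseteq> R"
    using assms unfolding Property2_def by (elim conjE exE) fast
  have sums: "g + h \<in> R" if "g \<in> A" "h \<in> B" for g h
    using sub that by blast
  have "A \<subseteq> R"
    using sums[OF _ \<open>0 \<in> B\<close>] by auto
  with \<open>finite R\<close> have "finite A"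
    by (rule finite_subset[rotated])
  obtain c where "(\<Sum>h\<in>A. c h * h) = 1"
    using generates_imp_bezout[OF \<open>finite A\<close> A(2)] .
  obtain b where "b \<in> B" "b \<noteq> 0"
    using affine_hull_orbit_nonzero[OF aff] .
  show ?thesis
  proof (rule that)
    show "0 \<in> R" "b \<in> R" "\<forall>h\<in>A. h + b \<in> R"
      using sums[OF A(1) \<open>0 \<in> B\<close>] sums[OF A(1) \<open>b \<in> B\<close>] sums[OF _ \<open>b \<in> B\<close>] by simp_all
  qed fact+
qed

theorem proposition5p1:
  fixes R :: "int set"
  assumes "Property2 R"
  shows "\<exists>c C. c > 0 \<and> C > 0 \<and>
    (\<forall>u\<in>Uper. c * gradnorm R u \<le> normR00 R u \<and> normR00 R u \<le> C * gradnorm R u) \<and>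
    (\<forall>u\<in>Uper.
       c * (gradnorm R u)\<^sup>2 \<le> infsum (\<lambda>k. (absk k)\<^sup>2 * (norm (uhat u k))\<^sup>2) Qk \<and>
       infsum (\<lambda>k. (absk k)\<^sup>2 * (norm (uhat u k))\<^sup>2) Qk \<le> C * (gradnorm R u)\<^sup>2) \<and>
    (\<forall>u\<in>Uper.
       c * (normR R u)\<^sup>2 \<le> infsum (\<lambda>k. (absk k)^4 * (cmod (uhat u k $ 1))\<^sup>2
                                        + (absk k)\<^sup>2 * (cmod (uhat u k $ 2))\<^sup>2) Qk \<and>
       infsum (\<lambda>k. (absk k)^4 * (cmod (uhat u k $ 1))\<^sup>2
                    + (absk k)\<^sup>2 * (cmod (uhat u k $ 2))\<^sup>2) Qk \<le> C * (normR R u)\<^sup>2)"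
proof -
  obtain A b c where R: "finite R" "0 \<in> R" "A \<subseteq> R" "\<forall>h\<in>A. h + b \<in> R" "b \<in> R" "b \<noteq> 0"
    and bezout: "(\<Sum>h\<in>A. c h * h) = 1"
    using Property2_imp_bezout_shift[OF assms] .
  show ?thesis
    using equivalent_on_common_constants[OF equivalent_on_gradnorm_normR00[OF R(1,2)]
        equivalent_on_gradnorm_sq_infsum[OF R(1,3) bezout] equivalent_on_normR_sq_infsum[OF R bezout]]
    by simp
qed

end
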